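(* For any complexity classes $\mathsf{B}$ and $\mathsf{C}$, $\mathsf{C/poly^B}\subseteq \mathsf{P^{C,\,Un(P^B)}}$.
   Context: $\mathsf{Un(D)}$ denotes the set of unary languages (all elements of the form $1^m$) in class $\mathsf{D}$; $\mathsf{X^Y}=\bigcup_{L\in\mathsf{Y}}\mathsf{X}^L$; a double oracle class is $\mathsf{D^{E,F}}=\bigcup_{L_E\in\mathsf{E},L_F\in\mathsf{F}}\mathsf{D}^{L_E,L_F}$, i.e. a $\mathsf{D}$ machine with oracle access to one language from $\mathsf{E}$ and one from $\mathsf{F}$. $\#$ is a separator symbol. (Bounded advice) A language $L$ is in $\mathsf{C/poly^B}$ if there is a sequence of advice strings $\{a_n\}_{n\in\mathbb N}$ such that (i) there is a deterministic polynomial-time Turing machine $T$ with oracle access to a language in $\mathsf{B}$ which on input $1^n$ halts in $\mathrm{poly}(n)$ time with $a_n$ as the final content of its tape, and (ii) the language $\{x\#a_{|x|}: x\in L\}$ is in $\mathsf{C}$. *)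

theory Defs
  imports Main
begin

datatype sym = Blank | S0 | S1 | Hash

type_synonym lang = "sym list set"

definition nonblank :: "sym list \<Rightarrow> bool" where
  "nonblank w \<longleftrightarrow> Blank \<notin> set w"

definition binary :: "sym list \<Rightarrow> bool" where
  "binary w \<longleftrightarrow> set w \<subseteq> {S0, S1}"

text \<open>A machine has a work tape (holding the input initially, and the output
  at the end) and an oracle query tape.  States are natural numbers, 0 is the start state, and a machine
  uses only finitely many states (see wf_otm).  An action
  Ask j qy qn queries oracle number j on the current contents of the query
  tape, then erases the query tape and continues in state qy (answer yes) or
  qn (answer no).  Stop b halts, accepting iff b.\<close>

datatype dir = Lft | Rgt | Stay

datatype action =
    Move nat sym dir sym dir
  | Ask nat nat nat
  | Stop bool

type_synonym otm = "nat \<Rightarrow> sym \<Rightarrow> sym \<Rightarrow> action"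

type_synonym conf = "nat \<times> (int \<Rightarrow> sym) \<times> int \<times> (int \<Rightarrow> sym) \<times> int"

fun targets :: "action \<Rightarrow> nat set" where
  "targets (Move q s1 d1 s2 d2) = {q}"
| "targets (Ask j qy qn) = {qy, qn}"
| "targets (Stop b) = {}"

definition wf_otm :: "nat \<Rightarrow> otm \<Rightarrow> bool" where
  "wf_otm N M \<longleftrightarrow> 0 < N \<and> (\<forall>q<N. \<forall>a b. \<forall>q'\<in>targets (M q a b). q' < N)"

fun mv :: "dir \<Rightarrow> int \<Rightarrow> int" where
  "mv Lft h = h - 1"
| "mv Rgt h = h + 1"
| "mv Stay h = h"

definition content :: "(int \<Rightarrow> sym) \<Rightarrow> sym list" where
  "content t = map (\<lambda>i. t (int i)) [0..<(LEAST n. t (int n) = Blank)]"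

definition init_tape :: "sym list \<Rightarrow> int \<Rightarrow> sym" where
  "init_tape x i = (if 0 \<le> i \<and> nat i < length x then x ! nat i else Blank)"

fun step :: "(nat \<Rightarrow> lang) \<Rightarrow> otm \<Rightarrow> conf \<Rightarrow> conf" where
  "step Or M (q, t1, h1, t2, h2) =
     (case M q (t1 h1) (t2 h2) of
        Move q' s1 d1 s2 d2 \<Rightarrow> (q', t1(h1 := s1), mv d1 h1, t2(h2 := s2), mv d2 h2)
      | Ask j qy qn \<Rightarrow> ((if content t2 \<in> Or j then qy else qn), t1, h1, (\<lambda>_. Blank), 0)
      | Stop b \<Rightarrow> (q, t1, h1, t2, h2))"

fun stop_of :: "otm \<Rightarrow> conf \<Rightarrow> bool option" where
  "stop_of M (q, t1, h1, t2, h2) =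
     (case M q (t1 h1) (t2 h2) of Stop b \<Rightarrow> Some b | _ \<Rightarrow> None)"

fun work_tape :: "conf \<Rightarrow> int \<Rightarrow> sym" where
  "work_tape (q, t1, h1, t2, h2) = t1"

definition run :: "(nat \<Rightarrow> lang) \<Rightarrow> otm \<Rightarrow> sym list \<Rightarrow> nat \<Rightarrow> conf" where
  "run Or M x n = (step Or M ^^ n) (0, init_tape x, 0, (\<lambda>_. Blank), 0)"

definition decides_in :: "(nat \<Rightarrow> lang) \<Rightarrow> otm \<Rightarrow> nat \<Rightarrow> lang \<Rightarrow> bool" where
  "decides_in Or M k L \<longleftrightarrow>
     (\<forall>x. nonblank x \<longrightarrow>
        (\<exists>n \<le> (length x + 2) ^ k. stop_of M (run Or M x n) = Some (x \<in> L)))"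

definition computes_advice_in :: "(nat \<Rightarrow> lang) \<Rightarrow> otm \<Rightarrow> nat \<Rightarrow> (nat \<Rightarrow> sym list) \<Rightarrow> bool" where
  "computes_advice_in Or M k a \<longleftrightarrow>
     (\<forall>n. \<exists>t \<le> (n + 2) ^ k.
        stop_of M (run Or M (replicate n S1) t) \<noteq> None \<and>
        content (work_tape (run Or M (replicate n S1) t)) = a n)"

definition P_oracle :: "(nat \<Rightarrow> lang) \<Rightarrow> lang \<Rightarrow> bool" where
  "P_oracle Or L \<longleftrightarrow> (\<forall>w\<in>L. nonblank w) \<and>
     (\<exists>M N k. wf_otm N M \<and> decides_in Or M k L)"

text \<open>A complexity class is an arbitrary set of languages.\<close>

definition Unary :: "lang set \<Rightarrow> lang set" where
  "Unary D = {L \<in> D. \<forall>w\<in>L. \<exists>m. w = replicate m S1}"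

definition P_rel :: "lang set \<Rightarrow> lang set" where
  "P_rel B = {L. \<exists>LB\<in>B. P_oracle (\<lambda>_. LB) L}"

definition P_rel2 :: "lang set \<Rightarrow> lang set \<Rightarrow> lang set" where
  "P_rel2 E F = {L. \<exists>LE\<in>E. \<exists>LF\<in>F.
      P_oracle (\<lambda>j. if j = 0 then LE else if j = 1 then LF else {}) L}"

definition Cpoly :: "lang set \<Rightarrow> lang set \<Rightarrow> lang set" where
  "Cpoly C B = {L. (\<forall>x\<in>L. binary x) \<and>
      (\<exists>a :: nat \<Rightarrow> sym list.
         (\<exists>LB\<in>B. \<exists>M N k. wf_otm N M \<and> computes_advice_in (\<lambda>_. LB) M k a) \<and>
         {x @ Hash # a (length x) | x. x \<in> L} \<in> C)}"

end

theory Submission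
  imports Defs
begin

text \<open>Let the advice a(n) be computed from 1^n in polynomial time with an oracle LB in B, and
  let LE = {x#a(|x|) | x in L} be in C.  Encode the final work tape W_n of the advice machine on
  1^n in the unary language LF that contains 1^m iff bit (m mod 2) of the two-bit code of the
  symbol W_n(i) is set, where (n, i) is the pair numbered m div 2 in the diagonal enumeration of
  pairs.  A machine with oracle LB decides LF in time polynomial in m: it counts its input into
  the pair (n, i), both at most m, simulates the advice machine on 1^n while marking cell i, and
  reads the marked cell at the end.  So LF is in Un(P^B).  Conversely, the pair (n, i) has the
  number tri (n + i) + n, polynomial in n + i.  Hence on an input x of length n, a
  polynomial-time machine with oracles LE and LF can fetch a(n) symbol by symbol, with two
  queries to LF per symbol until the code of a blank comes back, and then ask LE whether x#a(n)
  belongs to it.\<close>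

section \<open>Machines over arbitrary state types\<close>

text \<open>The machines below are written with structured state types.  They are turned into
  machines of type otm by numbering a finite set of states that is closed under transitions,
  with the start state numbered 0 (see P_oracle_of_gtm).\<close>

datatype 's instr = Go 's sym dir sym dir | Query nat 's 's | Halt bool

type_synonym 's gtm = "'s \<Rightarrow> sym \<Rightarrow> sym \<Rightarrow> 's instr"

type_synonym 's config = "'s \<times> (int \<Rightarrow> sym) \<times> int \<times> (int \<Rightarrow> sym) \<times> int"

fun gstep :: "(nat \<Rightarrow> lang) \<Rightarrow> 's gtm \<Rightarrow> 's config \<Rightarrow> 's config" where
  "gstep Or M (q, t1, h1, t2, h2) =
     (case M q (t1 h1) (t2 h2) of
        Go q' s1 d1 s2 d2 \<Rightarrow> (q', t1(h1 := s1), mv d1 h1, t2(h2 := s2), mv d2 h2)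
      | Query j qy qn \<Rightarrow> ((if content t2 \<in> Or j then qy else qn), t1, h1, (\<lambda>_. Blank), 0)
      | Halt b \<Rightarrow> (q, t1, h1, t2, h2))"

declare gstep.simps[simp del]

fun gstop_of :: "'s gtm \<Rightarrow> 's config \<Rightarrow> bool option" where
  "gstop_of M (q, t1, h1, t2, h2) = (case M q (t1 h1) (t2 h2) of Halt b \<Rightarrow> Some b | _ \<Rightarrow> None)"

definition reaches :: "(nat \<Rightarrow> lang) \<Rightarrow> 's gtm \<Rightarrow> 's config \<Rightarrow> 's config \<Rightarrow> nat \<Rightarrow> bool" where
  "reaches Or M c c' n \<longleftrightarrow> (\<exists>t\<le>n. (gstep Or M ^^ t) c = c')"

definition init_config :: "'s \<Rightarrow> sym list \<Rightarrow> 's config" where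
  "init_config s0 x = (s0, init_tape x, 0, (\<lambda>_. Blank), 0)"

definition gdecides_in :: "(nat \<Rightarrow> lang) \<Rightarrow> 's gtm \<Rightarrow> 's \<Rightarrow> nat \<Rightarrow> lang \<Rightarrow> bool" where
  "gdecides_in Or M s0 k L \<longleftrightarrow>
     (\<forall>x. nonblank x \<longrightarrow>
        (\<exists>r. reaches Or M (init_config s0 x) r ((length x + 2) ^ k) \<and> gstop_of M r = Some (x \<in> L)))"

lemma reaches_refl: "reaches Or M c c n"
  unfolding reaches_def by (rule exI[of _ 0]) auto

lemma reaches_trans:
  assumes "reaches Or M c1 c2 n1" "reaches Or M c2 c3 n2"
  shows "reaches Or M c1 c3 (n1 + n2)"
proof -
  obtain t1 t2 where t: "t1 \<le> n1" "(gstep Or M ^^ t1) c1 = c2" "t2 \<le> n2" "(gstep Or M ^^ t2) c2 = c3"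
    using assms unfolding reaches_def by blast
  then have "(gstep Or M ^^ (t2 + t1)) c1 = c3" by (simp add: funpow_add)
  moreover have "t2 + t1 \<le> n1 + n2" using t by simp
  ultimately show ?thesis unfolding reaches_def by blast
qed

lemma reaches_mono: "reaches Or M c1 c2 n1 \<Longrightarrow> n1 \<le> n2 \<Longrightarrow> reaches Or M c1 c2 n2"
  unfolding reaches_def using order_trans by blast

lemma reaches_step:
  assumes "gstep Or M c1 = c2" "reaches Or M c2 c3 n"
  shows "reaches Or M c1 c3 (Suc n)"
proof -
  obtain t where t: "t \<le> n" "(gstep Or M ^^ t) c2 = c3" using assms(2) unfolding reaches_def by blast
  then have "(gstep Or M ^^ Suc t) c1 = c3" using assms(1) by (simp add: funpow_swap1)
  then show ?thesis unfolding reaches_def using t(1) by (intro exI[of _ "Suc t"]) simp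
qed

lemma reaches_one: "gstep Or M c1 = c2 \<Longrightarrow> reaches Or M c1 c2 1"
  using reaches_step[of Or M c1 c2 c2 0] reaches_refl[of Or M c2 0] by simp

lemma gstep_Go:
  "M q (t1 h1) (t2 h2) = Go q' s1 d1 s2 d2 \<Longrightarrow>
   gstep Or M (q, t1, h1, t2, h2) = (q', t1(h1 := s1), mv d1 h1, t2(h2 := s2), mv d2 h2)"
  by (simp add: gstep.simps)

fun action_of :: "('s \<Rightarrow> nat) \<Rightarrow> 's instr \<Rightarrow> action" where
  "action_of e (Go q s1 d1 s2 d2) = Move (e q) s1 d1 s2 d2"
| "action_of e (Query j x y) = Ask j (e x) (e y)"
| "action_of e (Halt b) = Stop b"

fun instr_targets :: "'s instr \<Rightarrow> 's set" where
  "instr_targets (Go q s1 d1 s2 d2) = {q}"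
| "instr_targets (Query j x y) = {x, y}"
| "instr_targets (Halt b) = {}"

definition closed_states :: "'s set \<Rightarrow> 's gtm \<Rightarrow> bool" where
  "closed_states V M \<longleftrightarrow> (\<forall>s\<in>V. \<forall>a b. instr_targets (M s a b) \<subseteq> V)"

definition nat_machine :: "'s set \<Rightarrow> ('s \<Rightarrow> nat) \<Rightarrow> 's gtm \<Rightarrow> otm" where
  "nat_machine V e M q a b = (if q \<in> e ` V then action_of e (M (inv_into V e q) a b) else Stop False)"

fun nat_config :: "('s \<Rightarrow> nat) \<Rightarrow> 's config \<Rightarrow> conf" where
  "nat_config e (q, r) = (e q, r)"

lemma nat_machine_at: "inj_on e V \<Longrightarrow> q \<in> V \<Longrightarrow> nat_machine V e M (e q) a b = action_of e (M q a b)"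
  unfolding nat_machine_def by auto

lemma step_nat_machine:
  assumes "inj_on e V" "fst c \<in> V"
  shows "step Or (nat_machine V e M) (nat_config e c) = nat_config e (gstep Or M c)"
proof -
  obtain q t1 h1 t2 h2 where c: "c = (q, t1, h1, t2, h2)" by (cases c) auto
  have q: "q \<in> V" using assms c by auto
  show ?thesis unfolding c using nat_machine_at[OF assms(1) q, of M]
    by (cases "M q (t1 h1) (t2 h2)") (auto simp: gstep.simps)
qed

lemma stop_of_nat_machine:
  assumes "inj_on e V" "fst c \<in> V"
  shows "stop_of (nat_machine V e M) (nat_config e c) = gstop_of M c"
proof -
  obtain q t1 h1 t2 h2 where c: "c = (q, t1, h1, t2, h2)" by (cases c) auto
  have q: "q \<in> V" using assms c by auto
  show ?thesis unfolding c using nat_machine_at[OF assms(1) q, of M]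
    by (cases "M q (t1 h1) (t2 h2)") auto
qed

lemma gstep_closed:
  assumes "closed_states V M" "fst c \<in> V"
  shows "fst (gstep Or M c) \<in> V"
proof -
  obtain q t1 h1 t2 h2 where c: "c = (q, t1, h1, t2, h2)" by (cases c) auto
  have q: "q \<in> V" using assms c by auto
  have "instr_targets (M q (t1 h1) (t2 h2)) \<subseteq> V" using assms(1) q unfolding closed_states_def by blast
  then show ?thesis unfolding c using q
    by (cases "M q (t1 h1) (t2 h2)") (auto simp: gstep.simps)
qed

lemma gsteps_closed:
  assumes "closed_states V M" "fst c \<in> V"
  shows "fst ((gstep Or M ^^ n) c) \<in> V"
  using assms(2) by (induction n) (auto intro: gstep_closed[OF assms(1)])

lemma steps_nat_machine:
  assumes "inj_on e V" "closed_states V M" "fst c \<in> V"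
  shows "(step Or (nat_machine V e M) ^^ n) (nat_config e c) = nat_config e ((gstep Or M ^^ n) c)"
proof (induction n)
  case 0 then show ?case by simp
next
  case (Suc n)
  have "fst ((gstep Or M ^^ n) c) \<in> V" by (rule gsteps_closed[OF assms(2,3)])
  then show ?case using Suc step_nat_machine[OF assms(1)] by simp
qed

lemma wf_nat_machine:
  assumes "inj_on e V" "finite V" "closed_states V M"
  shows "wf_otm (Suc (Max (e ` V))) (nat_machine V e M)"
  unfolding wf_otm_def
proof (intro conjI allI impI ballI)
  fix q a b q'
  assume q': "q' \<in> targets (nat_machine V e M q a b)"
  show "q' < Suc (Max (e ` V))"
  proof (cases "q \<in> e ` V")
    case True
    then obtain s where s: "s \<in> V" "q = e s" by auto
    have "nat_machine V e M q a b = action_of e (M s a b)" using nat_machine_at[OF assms(1) s(1)] s by simp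
    then have "q' \<in> e ` instr_targets (M s a b)" using q' by (cases "M s a b") auto
    then obtain s' where s': "s' \<in> instr_targets (M s a b)" "q' = e s'" by blast
    have "s' \<in> V" using s' assms(3) s unfolding closed_states_def by blast
    then show ?thesis using s' assms(2) by (simp add: le_imp_less_Suc)
  next
    case False then show ?thesis using q' unfolding nat_machine_def by simp
  qed
qed simp

lemma ex_inj_on_nat_zero:
  assumes "finite (V :: 's set)"
  shows "\<exists>e :: 's \<Rightarrow> nat. inj_on e V \<and> e start = 0"
proof -
  obtain f :: "'s \<Rightarrow> nat" where f: "inj_on f V" using finite_imp_inj_to_nat_seg[OF assms] by blast
  define e where "e s = (if s = start then 0 else Suc (f s))" for s
  have "inj_on e V" using f unfolding e_def inj_on_def by auto
  moreover have "e start = 0" unfolding e_def by simp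
  ultimately show ?thesis by blast
qed

lemma P_oracle_of_gtm:
  fixes M :: "'s gtm"
  assumes "finite V" "s0 \<in> V" "closed_states V M" and M: "gdecides_in Or M s0 k L"
    and "\<forall>w\<in>L. nonblank w"
  shows "P_oracle Or L"
proof -
  obtain e :: "'s \<Rightarrow> nat" where e: "inj_on e V" "e s0 = 0"
    using ex_inj_on_nat_zero[OF assms(1)] by blast
  have "decides_in Or (nat_machine V e M) k L"
    unfolding decides_in_def
  proof (intro allI impI)
    fix x :: "sym list" assume "nonblank x"
    then obtain t r where t: "t \<le> (length x + 2) ^ k" "(gstep Or M ^^ t) (init_config s0 x) = r"
        "gstop_of M r = Some (x \<in> L)"
      using M unfolding gdecides_in_def reaches_def by blast
    have start: "fst (init_config s0 x) \<in> V" using assms(2) unfolding init_config_def by simp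
    have "nat_config e (init_config s0 x) = (0, init_tape x, 0, (\<lambda>_. Blank), 0)"
      using e unfolding init_config_def by simp
    then have "run Or (nat_machine V e M) x t = nat_config e r"
      unfolding run_def using steps_nat_machine[OF e(1) assms(3) start] t(2) by metis
    moreover have "fst r \<in> V" using gsteps_closed[OF assms(3) start] t(2) by blast
    ultimately have "stop_of (nat_machine V e M) (run Or (nat_machine V e M) x t) = Some (x \<in> L)"
      using stop_of_nat_machine[OF e(1)] t(3) by simp
    then show "\<exists>n\<le>(length x + 2) ^ k. stop_of (nat_machine V e M) (run Or (nat_machine V e M) x n) = Some (x \<in> L)"
      using t(1) by blast
  qed
  then show ?thesis using wf_nat_machine[OF e(1) assms(1,3)] assms(5) unfolding P_oracle_def by blast
qed

section \<open>Tapes and sweeps\<close>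

fun shift :: "dir \<Rightarrow> int" where
  "shift Lft = -1" | "shift Rgt = 1" | "shift Stay = 0"

lemma mv_shift: "mv d h = h + shift d"
  by (cases d) auto

lemma gstep_write:
  "M q (t1 h1) (t2 h2) = Go q' s d (t2 h2) Stay \<Longrightarrow>
   gstep Or M (q, t1, h1, t2, h2) = (q', t1(h1 := s), h1 + shift d, t2, h2)"
  by (simp add: gstep_Go mv_shift)

lemma gstep_move:
  "M q (t1 h1) (t2 h2) = Go q' (t1 h1) d (t2 h2) Stay \<Longrightarrow>
   gstep Or M (q, t1, h1, t2, h2) = (q', t1, h1 + shift d, t2, h2)"
  by (simp add: gstep_write)

lemma sweep:
  assumes X: "\<And>a c. a \<in> A \<Longrightarrow> M X a c = Go X a d c Stay"
    and cells: "\<And>j. j < k \<Longrightarrow> t1 (h + shift d * int j) \<in> A"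
  shows "reaches Or M (X, t1, h, t2, h2) (X, t1, h + shift d * int k, t2, h2) k"
  using cells
proof (induction k)
  case 0
  then show ?case by (simp add: reaches_refl)
next
  case (Suc k)
  then have IH: "reaches Or M (X, t1, h, t2, h2) (X, t1, h + shift d * int k, t2, h2) k" by simp
  have "t1 (h + shift d * int k) \<in> A" using Suc.prems by simp
  then have "gstep Or M (X, t1, h + shift d * int k, t2, h2) = (X, t1, h + shift d * int k + shift d, t2, h2)"
    using X by (intro gstep_move) simp
  then have "reaches Or M (X, t1, h + shift d * int k, t2, h2) (X, t1, h + shift d * int (Suc k), t2, h2) 1"
    by (intro reaches_one) (simp add: algebra_simps)
  from reaches_trans[OF IH this] show ?case by simp
qed

lemma sweep_track:
  assumes X: "\<And>a c. a \<in> A \<Longrightarrow> M X a c = Go Y a d c Stay"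
    and Y: "\<And>a c. M Y a c = Go X a d c Stay"
    and cells: "\<And>j. j < k \<Longrightarrow> t1 (h + 2 * shift d * int j) \<in> A"
  shows "reaches Or M (X, t1, h, t2, h2) (X, t1, h + 2 * shift d * int k, t2, h2) (2 * k)"
  using cells
proof (induction k)
  case 0
  then show ?case by (simp add: reaches_refl)
next
  case (Suc k)
  then have IH: "reaches Or M (X, t1, h, t2, h2) (X, t1, h + 2 * shift d * int k, t2, h2) (2 * k)" by simp
  let ?h = "h + 2 * shift d * int k"
  have "t1 ?h \<in> A" using Suc.prems by simp
  then have s1: "gstep Or M (X, t1, ?h, t2, h2) = (Y, t1, ?h + shift d, t2, h2)"
    using X by (intro gstep_move) simp
  have "gstep Or M (Y, t1, ?h + shift d, t2, h2) = (X, t1, ?h + shift d + shift d, t2, h2)"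
    using Y by (intro gstep_move) simp
  then have s2: "gstep Or M (Y, t1, ?h + shift d, t2, h2) = (X, t1, h + 2 * shift d * int (Suc k), t2, h2)"
    by (simp add: algebra_simps)
  from reaches_trans[OF IH reaches_step[OF s1 reaches_one[OF s2]]] show ?case by simp
qed

lemma content_eqI:
  assumes "\<And>j. j < length w \<Longrightarrow> t (int j) = w ! j" "t (int (length w)) = Blank" "Blank \<notin> set w"
  shows "content t = w"
proof -
  have L: "(LEAST n. t (int n) = Blank) = length w"
  proof (rule Least_equality)
    show "t (int (length w)) = Blank" by fact
  next
    fix y assume y: "t (int y) = Blank"
    show "length w \<le> y"
    proof (rule ccontr)
      assume "\<not> length w \<le> y"
      then have "y < length w" by simp
      moreover have "w ! y = Blank" using assms(1) y calculation by simp
      ultimately show False using assms(3) nth_mem by fastforce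
    qed
  qed
  show ?thesis unfolding content_def L
    by (rule nth_equalityI) (auto simp: assms(1))
qed

lemma content_blank: "content (\<lambda>_. Blank) = []"
  by (rule content_eqI) auto

lemma init_tape_nth: "j < length w \<Longrightarrow> init_tape w (int j) = w ! j"
  by (simp add: init_tape_def)

lemma init_tape_neg: "p < 0 \<Longrightarrow> init_tape w p = Blank"
  by (simp add: init_tape_def)

lemma init_tape_length: "init_tape w (int (length w)) = Blank"
  by (simp add: init_tape_def)

lemma init_tape_snoc: "(init_tape w)(int (length w) := s) = init_tape (w @ [s])"
  by (rule ext) (auto simp: init_tape_def nth_append)

lemma content_init: "nonblank x \<Longrightarrow> content (init_tape x) = x"
  by (rule content_eqI) (auto simp: init_tape_def nonblank_def)

lemma nth_nonblank: "Blank \<notin> set w \<Longrightarrow> j < length w \<Longrightarrow> w ! j \<noteq> Blank"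
  using nth_mem by fastforce

lemma sweep_left:
  assumes "Blank \<notin> set w" "k \<le> length w" "\<And>a c. a \<noteq> Blank \<Longrightarrow> M X a c = Go X a Lft c Stay"
  shows "reaches Or M (X, init_tape w, int k - 1, Q, qh) (X, init_tape w, -1, Q, qh) k"
proof -
  have "reaches Or M (X, init_tape w, int k - 1, Q, qh) (X, init_tape w, int k - 1 + shift Lft * int k, Q, qh) k"
  proof (rule sweep[where A = "- {Blank}"])
    fix j assume j: "j < k"
    have e: "int k - 1 + shift Lft * int j = int (k - 1 - j)" using j by simp
    have "k - 1 - j < length w" using j assms(2) by simp
    then show "init_tape w (int k - 1 + shift Lft * int j) \<in> - {Blank}"
      unfolding e using assms(1) by (simp add: init_tape_nth nth_nonblank)
  qed (use assms(3) in auto)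
  then show ?thesis by simp
qed

definition ones :: "nat \<Rightarrow> int \<Rightarrow> sym" where
  "ones n c = (if 0 \<le> c \<and> c < int n then S1 else Blank)"

lemma ones_0: "ones 0 = (\<lambda>_. Blank)"
  by (rule ext) (simp add: ones_def)

lemma ones_init: "ones n = init_tape (replicate n S1)"
  unfolding ones_def init_tape_def by (rule ext) auto

lemma ones_snoc: "(ones n)(int n := S1) = ones (Suc n)"
  by (rule ext) (auto simp: ones_def)

lemma content_ones: "content (ones m) = replicate m S1"
  by (rule content_eqI) (auto simp: ones_def)

definition tracks :: "int \<Rightarrow> (int \<Rightarrow> sym) \<Rightarrow> (int \<Rightarrow> sym) \<Rightarrow> int \<Rightarrow> sym" where
  "tracks z f g p = (if even (p - z) then f ((p - z) div 2) else g ((p - z) div 2))"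

lemma tracks_even: "p = z + 2 * c \<Longrightarrow> tracks z f g p = f c"
  unfolding tracks_def by simp

lemma tracks_odd: "p = z + 2 * c + 1 \<Longrightarrow> tracks z f g p = g c"
  unfolding tracks_def by simp

lemma tracks_even_simp[simp]: "tracks z f g (z + 2 * c) = f c"
  by (rule tracks_even) simp

lemma tracks_odd_simp[simp]: "tracks z f g (z + 2 * c + 1) = g c"
  by (rule tracks_odd) simp

lemma int_parity_cases:
  obtains e where "q = z + 2 * e" | e where "q = z + 2 * e + (1::int)"
proof -
  have "q - z = 2 * ((q - z) div 2) \<or> q - z = 2 * ((q - z) div 2) + 1" by presburger
  then show ?thesis using that by (metis add.commute add.left_commute diff_add_cancel)
qed

lemma tracks_upd_even: "p = z + 2 * c \<Longrightarrow> (tracks z f g)(p := s) = tracks z (f(c := s)) g"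
proof (rule ext)
  fix q assume p: "p = z + 2 * c"
  show "((tracks z f g)(p := s)) q = tracks z (f(c := s)) g q"
    by (cases q z rule: int_parity_cases) (auto simp: p, presburger)
qed

lemma tracks_upd_odd: "p = z + 2 * c + 1 \<Longrightarrow> (tracks z f g)(p := s) = tracks z f (g(c := s))"
proof (rule ext)
  fix q assume p: "p = z + 2 * c + 1"
  show "((tracks z f g)(p := s)) q = tracks z f (g(c := s)) q"
    by (cases q z rule: int_parity_cases) (auto simp: p, presburger+)
qed

section \<open>Enumerating pairs along diagonals\<close>

fun pair_succ :: "nat \<times> nat \<Rightarrow> nat \<times> nat" where
  "pair_succ (n, i) = (if 0 < i then (Suc n, i - 1) else (0, Suc n))"

definition unpair :: "nat \<Rightarrow> nat \<times> nat" where
  "unpair E = (pair_succ ^^ E) (0, 0)"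

definition tri :: "nat \<Rightarrow> nat" where
  "tri s = s * (s + 1) div 2"

lemma tri_Suc: "tri (Suc s) = tri s + Suc s"
  unfolding tri_def by (induction s) auto

lemma tri_eq_sum: "tri s = (\<Sum>j<Suc s. j)"
  by (induction s) (simp_all add: tri_Suc, simp add: tri_def)

lemma unpair_Suc: "unpair (Suc E) = pair_succ (unpair E)"
  unfolding unpair_def by simp

lemma unpair_diag: "j \<le> s \<Longrightarrow> unpair (tri s + j) = (j, s - j)"
proof (induction s arbitrary: j)
  case 0
  then show ?case by (simp add: unpair_def tri_def)
next
  case (Suc s)
  show ?case using Suc.prems
  proof (induction j)
    case 0
    have "unpair (tri s + s) = (s, 0)" using Suc.IH[of s] by simp
    then show ?case by (simp add: tri_Suc unpair_Suc)
  next
    case (Suc j)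
    then show ?case by (simp add: unpair_Suc)
  qed
qed

lemma unpair_tri: "unpair (tri (n + i) + n) = (n, i)"
  using unpair_diag[of n "n + i"] by simp

lemma unpair_sum_le: "fst (unpair E) + snd (unpair E) \<le> E"
proof (induction E)
  case 0 then show ?case by (simp add: unpair_def)
next
  case (Suc E)
  then show ?case by (cases "unpair E") (auto simp: unpair_Suc)
qed

section \<open>Runs of oracle machines\<close>

fun work_head :: "conf \<Rightarrow> int" where
  "work_head (q, t1, h1, t2, h2) = h1"

lemma wf_otm_step:
  assumes "wf_otm N M" "fst c < N"
  shows "fst (step Or M c) < N"
proof -
  obtain q t1 h1 t2 h2 where c: "c = (q, t1, h1, t2, h2)" by (cases c) auto
  have "q < N" using assms c by simp
  then have "\<forall>q'\<in>targets (M q (t1 h1) (t2 h2)). q' < N" using assms(1) unfolding wf_otm_def by blast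
  then show ?thesis unfolding c using \<open>q < N\<close> by (cases "M q (t1 h1) (t2 h2)") auto
qed

lemma wf_otm_steps:
  assumes "wf_otm N M" "fst c < N"
  shows "fst ((step Or M ^^ t) c) < N"
  by (induction t) (auto intro: wf_otm_step[OF assms(1)] simp: assms(2))

lemma abs_mv_le: "\<bar>mv d h\<bar> \<le> \<bar>h\<bar> + 1"
  by (cases d) auto

lemma work_head_step: "\<bar>work_head (step Or M c)\<bar> \<le> \<bar>work_head c\<bar> + 1"
  by (cases c) (auto simp: abs_mv_le split: action.splits)

lemma work_head_steps: "\<bar>work_head ((step Or M ^^ t) c)\<bar> \<le> \<bar>work_head c\<bar> + int t"
proof (induction t)
  case 0 then show ?case by simp
next
  case (Suc t)
  then show ?case using work_head_step[of Or M "(step Or M ^^ t) c"] by simp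
qed

lemma step_stopped: "stop_of M c \<noteq> None \<Longrightarrow> step Or M c = c"
  by (cases c) (auto split: action.splits)

lemma steps_stopped: "stop_of M c \<noteq> None \<Longrightarrow> (step Or M ^^ t) c = c"
  by (induction t) (auto simp: step_stopped)

lemma run_add: "run Or M x (t + d) = (step Or M ^^ d) (run Or M x t)"
  unfolding run_def by (simp add: add.commute[of t d] funpow_add)

lemma work_tape_blank_beyond:
  "int n + int t \<le> p \<Longrightarrow> work_tape ((step Or M ^^ t) (q0, init_tape (replicate n S1), 0, t2, h2)) p = Blank"
proof (induction t arbitrary: p)
  case 0 then show ?case by (simp add: init_tape_def)
next
  case (Suc t)
  let ?c0 = "(q0, init_tape (replicate n S1), 0::int, t2, h2)"
  obtain q t1 h1 u2 g2 where ct: "(step Or M ^^ t) ?c0 = (q, t1, h1, u2, g2)"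
    by (cases "(step Or M ^^ t) ?c0") auto
  have "\<bar>h1\<bar> \<le> int t" using work_head_steps[where Or = Or and M = M and t = t and c = ?c0] ct by simp
  then have "p \<noteq> h1" using Suc.prems by simp
  moreover have "t1 p = Blank" using Suc.IH[of p] Suc.prems ct by simp
  ultimately show ?case using ct by (cases "M q (t1 h1) (u2 g2)") auto
qed

definition halt_time :: "(nat \<Rightarrow> lang) \<Rightarrow> otm \<Rightarrow> nat \<Rightarrow> nat" where
  "halt_time Or M n = (LEAST t. stop_of M (run Or M (replicate n S1) t) \<noteq> None)"

definition final_tape :: "(nat \<Rightarrow> lang) \<Rightarrow> otm \<Rightarrow> nat \<Rightarrow> int \<Rightarrow> sym" where
  "final_tape Or M n = work_tape (run Or M (replicate n S1) (halt_time Or M n))"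

lemma not_stopped_before_halt_time:
  "t < halt_time Or M n \<Longrightarrow> stop_of M (run Or M (replicate n S1) t) = None"
  unfolding halt_time_def using not_less_Least by blast

lemma final_tape_blank_beyond: "int n + int (halt_time Or M n) \<le> p \<Longrightarrow> final_tape Or M n p = Blank"
  unfolding final_tape_def run_def by (rule work_tape_blank_beyond)

lemma
  assumes "computes_advice_in Or M k a"
  shows halt_time_le: "halt_time Or M n \<le> (n + 2) ^ k"
    and stopped_at_halt_time: "stop_of M (run Or M (replicate n S1) (halt_time Or M n)) \<noteq> None"
    and content_final_tape: "content (final_tape Or M n) = a n"
proof -
  obtain t where t: "t \<le> (n + 2) ^ k" "stop_of M (run Or M (replicate n S1) t) \<noteq> None"
      "content (work_tape (run Or M (replicate n S1) t)) = a n"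
    using assms unfolding computes_advice_in_def by blast
  have le: "halt_time Or M n \<le> t" unfolding halt_time_def by (rule Least_le) (rule t(2))
  then show "halt_time Or M n \<le> (n + 2) ^ k" using t(1) by simp
  show stopped: "stop_of M (run Or M (replicate n S1) (halt_time Or M n)) \<noteq> None"
    unfolding halt_time_def by (rule LeastI) (rule t(2))
  have "run Or M (replicate n S1) t = run Or M (replicate n S1) (halt_time Or M n)"
    using run_add[of Or M "replicate n S1" "halt_time Or M n" "t - halt_time Or M n"] le
      steps_stopped[OF stopped] by simp
  then show "content (final_tape Or M n) = a n" using t(3) unfolding final_tape_def by simp
qed

section \<open>The unary language and its decider\<close>

text \<open>Blank is the only symbol with both bits False, so it signals the end of the advice.\<close>

fun sym_bit :: "bool \<Rightarrow> sym \<Rightarrow> bool" where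
  "sym_bit False s = (s = S1 \<or> s = Hash)"
| "sym_bit True s = (s = S0 \<or> s = Hash)"

definition advice_lang :: "(nat \<Rightarrow> lang) \<Rightarrow> otm \<Rightarrow> lang" where
  "advice_lang Or M = {replicate m S1 | m.
     sym_bit (odd m) (final_tape Or M (fst (unpair (m div 2))) (int (snd (unpair (m div 2)))))}"

lemma advice_lang_iff:
  "replicate m S1 \<in> advice_lang Or M \<longleftrightarrow>
   sym_bit (odd m) (final_tape Or M (fst (unpair (m div 2))) (int (snd (unpair (m div 2)))))"
  unfolding advice_lang_def by auto

text \<open>While
  the head of the simulated machine moves, lo..hi grows so that cell i can always be found again
  by walking along this track.\<close>

definition marker :: "int \<Rightarrow> int \<Rightarrow> int \<Rightarrow> int \<Rightarrow> sym" where
  "marker lo hi i c = (if lo \<le> c \<and> c \<le> hi then (if c < i then S0 else if c = i then S1 else Hash) else Blank)"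

text \<open>The pair (n, i) is stored from cell z on as 1^n on the even track and the marker of cell i
  on the odd track.  The even track is the input 1^n of the simulated advice machine.\<close>

definition counter :: "int \<Rightarrow> nat \<times> nat \<Rightarrow> int \<Rightarrow> sym" where
  "counter z p = tracks z (ones (fst p)) (marker (-1) (int (snd p)) (int (snd p)))"

lemma counter_odd: "p = z + 2 * c + 1 \<Longrightarrow> counter z (n, i) p = marker (-1) (int i) (int i) c"
  unfolding counter_def by (simp add: tracks_odd)

datatype ustate = Copy | Init1 | Init2 | Init3 | Init4 | Count bool
  | Succ | SuccTest | SuccScan | SuccScan1 | Shift1 | Shift2 | Shift3
  | Back bool | Back1 bool | Back2 bool | Back3 bool
  | Grow | Grow1 | Grow2 | GrowBack | GrowBack1 | GrowBack2
  | Wrap | Wrap1 | Wrap2 | Wrap3 | Wrap4 | Wrap5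
  | Sim nat bool | SimR1 nat bool | SimR2 nat bool | SimR3 nat bool | SimL1 nat bool | SimL2 nat bool | SimL3 nat bool
  | Seek bool | SeekR bool | SeekL bool | ReadBit bool

text \<open>On input 1^m, Copy moves the input to the query tape and Init writes the counter (0, 0) at
  cell m.  Count b then erases the ones on the query tape one by one, b being the parity of the
  number erased so far, and calls the successor routine Succ after every second one.  Succ moves
  the marker one cell left and appends a 1 (Shift, Grow), or turns (n, 0) into (0, n + 1) (Wrap).
  Once the query tape is empty, Count asks a query only to reset the query head (the answer is
  ignored), and Sim simulates M on the even track, a move of M becoming a move by two cells
  during which the marker track is extended.  When M halts, Seek walks along the marker track to
  the marked cell, and ReadBit outputs the requested bit of the symbol there.\<close>

fun unary_machine :: "otm \<Rightarrow> nat \<Rightarrow> ustate gtm" where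
  "unary_machine M NM Copy a c =
     (if a = S1 then Go Copy Blank Rgt S1 Rgt else if a = Blank then Go Init1 Blank Stay c Lft else Halt False)"
| "unary_machine M NM Init1 a c = Go Init2 a Lft c Stay"
| "unary_machine M NM Init2 a c = Go Init3 S0 Rgt c Stay"
| "unary_machine M NM Init3 a c = Go Init4 a Rgt c Stay"
| "unary_machine M NM Init4 a c = Go (Count False) S1 Lft c Stay"
| "unary_machine M NM (Count b) a c =
     (if c = S1 then Go (if b then Succ else Count True) a Stay Blank Lft else Query 0 (Sim 0 b) (Sim 0 b))"
| "unary_machine M NM Succ a c = Go SuccTest a Rgt c Stay"
| "unary_machine M NM SuccTest a c = (if a = S1 then Go Wrap a Lft c Stay else Go SuccScan1 a Rgt c Stay)"
| "unary_machine M NM SuccScan a c = (if a = S0 then Go SuccScan1 a Rgt c Stay else Go Shift1 Blank Lft c Stay)"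
| "unary_machine M NM SuccScan1 a c = Go SuccScan a Rgt c Stay"
| "unary_machine M NM Shift1 a c = Go Shift2 a Lft c Stay"
| "unary_machine M NM Shift2 a c = Go Shift3 S1 Lft c Stay"
| "unary_machine M NM Shift3 a c = Go (Back True) a Lft c Stay"
| "unary_machine M NM (Back t) a c = (if a = S0 then Go (Back1 t) a Lft c Stay else Go (Back2 t) a Rgt c Stay)"
| "unary_machine M NM (Back1 t) a c = Go (Back t) a Lft c Stay"
| "unary_machine M NM (Back2 t) a c = Go (Back3 t) a Rgt c Stay"
| "unary_machine M NM (Back3 t) a c = Go (if t then Grow else Count False) a Rgt c Stay"
| "unary_machine M NM Grow a c = (if a = S1 then Go Grow1 a Rgt c Stay else Go Grow2 S1 Lft c Stay)"
| "unary_machine M NM Grow1 a c = Go Grow a Rgt c Stay"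
| "unary_machine M NM Grow2 a c = Go GrowBack a Lft c Stay"
| "unary_machine M NM GrowBack a c = (if a = S1 then Go GrowBack1 a Lft c Stay else Go GrowBack2 a Rgt c Stay)"
| "unary_machine M NM GrowBack1 a c = Go GrowBack a Lft c Stay"
| "unary_machine M NM GrowBack2 a c = Go (Count False) a Rgt c Stay"
| "unary_machine M NM Wrap a c = (if a = S1 then Go Wrap1 Blank Rgt c Stay else Go Wrap2 a Rgt c Stay)"
| "unary_machine M NM Wrap1 a c = Go Wrap S0 Rgt c Stay"
| "unary_machine M NM Wrap2 a c = Go Wrap3 S0 Rgt c Stay"
| "unary_machine M NM Wrap3 a c = Go Wrap4 a Rgt c Stay"
| "unary_machine M NM Wrap4 a c = Go Wrap5 S1 Lft c Stay"
| "unary_machine M NM Wrap5 a c = Go (Back False) a Lft c Stay"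
| "unary_machine M NM (Sim q b) a c = (if q < NM then
      (case M q a c of
         Move q' s1 d1 s2 d2 \<Rightarrow> Go (case d1 of Stay \<Rightarrow> Sim q' b | Rgt \<Rightarrow> SimR1 q' b | Lft \<Rightarrow> SimL1 q' b) s1 d1 s2 d2
       | Ask j qy qn \<Rightarrow> Query j (Sim qy b) (Sim qn b)
       | Stop _ \<Rightarrow> Go (Seek b) a Rgt c Stay)
    else Halt False)"
| "unary_machine M NM (SimR1 q b) a c = Go (SimR2 q b) a Rgt c Stay"
| "unary_machine M NM (SimR2 q b) a c = Go (SimR3 q b) a Rgt c Stay"
| "unary_machine M NM (SimR3 q b) a c = Go (Sim q b) (if a = Blank then Hash else a) Lft c Stay"
| "unary_machine M NM (SimL1 q b) a c = Go (SimL2 q b) a Lft c Stay"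
| "unary_machine M NM (SimL2 q b) a c = Go (SimL3 q b) a Lft c Stay"
| "unary_machine M NM (SimL3 q b) a c = Go (Sim q b) (if a = Blank then S0 else a) Rgt c Stay"
| "unary_machine M NM (Seek b) a c =
     (if a = S0 then Go (SeekR b) a Rgt c Stay else if a = Hash then Go (SeekL b) a Lft c Stay
      else if a = S1 then Go (ReadBit b) a Lft c Stay else Halt False)"
| "unary_machine M NM (SeekR b) a c = Go (Seek b) a Rgt c Stay"
| "unary_machine M NM (SeekL b) a c = Go (Seek b) a Lft c Stay"
| "unary_machine M NM (ReadBit b) a c = Halt (sym_bit b a)"

declare fun_upd_idem_iff[simp]

lemma succ_find_marker:
  assumes i: "0 < i"
  shows "reaches Or (unary_machine M NM) (Succ, counter z (n, i), z, Q, qh)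
           (SuccScan, counter z (n, i), z + 2 * int i + 1, Q, qh) (2 * i + 1)"
proof -
  let ?M = "unary_machine M NM"
  let ?T = "counter z (n, i)"
  have a: "gstep Or ?M (Succ, ?T, z, Q, qh) = (SuccTest, ?T, z + 1, Q, qh)" by (simp add: gstep.simps)
  have "?T (z + 1) = S0" using i by (subst counter_odd[where c = 0]) (auto simp: marker_def)
  then have b: "gstep Or ?M (SuccTest, ?T, z + 1, Q, qh) = (SuccScan1, ?T, z + 2, Q, qh)"
    by (simp add: gstep.simps)
  have c: "gstep Or ?M (SuccScan1, ?T, z + 2, Q, qh) = (SuccScan, ?T, z + 3, Q, qh)" by (simp add: gstep.simps)
  have "reaches Or ?M (SuccScan, ?T, z + 3, Q, qh)
      (SuccScan, ?T, z + 3 + 2 * shift Rgt * int (i - 1), Q, qh) (2 * (i - 1))"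
  proof (rule sweep_track[where A = "{S0}" and Y = SuccScan1])
    fix j assume "j < i - 1"
    then show "?T (z + 3 + 2 * shift Rgt * int j) \<in> {S0}"
      by (subst counter_odd[where c = "int j + 1"]) (auto simp: marker_def)
  qed auto
  moreover have "z + 3 + 2 * shift Rgt * int (i - 1) = z + 2 * int i + 1" using i by simp
  ultimately have scan: "reaches Or ?M (SuccScan, ?T, z + 3, Q, qh) (SuccScan, ?T, z + 2 * int i + 1, Q, qh) (2 * (i - 1))"
    by (simp only:)
  have "reaches Or ?M (Succ, ?T, z, Q, qh) (SuccScan, ?T, z + 2 * int i + 1, Q, qh) (Suc (Suc (Suc (2 * (i - 1)))))"
    by (rule reaches_step[OF a reaches_step[OF b reaches_step[OF c scan]]])
  moreover have "Suc (Suc (Suc (2 * (i - 1)))) = 2 * i + 1" using i by simp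
  ultimately show ?thesis by (simp only:)
qed

lemma succ_shift_marker:
  assumes i: "0 < i"
  shows "reaches Or (unary_machine M NM) (Succ, counter z (n, i), z, Q, qh)
           (Back True, tracks z (ones n) (marker (-1) (int i - 1) (int i - 1)), z + 2 * int i - 3, Q, qh)
           (2 * i + 5)"
proof -
  let ?M = "unary_machine M NM"
  let ?g = "marker (-1) (int i) (int i)"
  let ?T = "counter z (n, i)"
  let ?T' = "?T(z + 2 * int i + 1 := Blank)"
  let ?T2 = "tracks z (ones n) (marker (-1) (int i - 1) (int i - 1))"
  have "(?g(int i := Blank))(int i - 1 := S1) = marker (-1) (int i - 1) (int i - 1)"
    using i by (intro ext) (auto simp: marker_def)
  then have T2: "?T'(z + 2 * int i - 1 := S1) = ?T2" unfolding counter_def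
    by (subst tracks_upd_odd[where c = "int i"], simp, subst tracks_upd_odd[where c = "int i - 1"], simp_all)
  have "?T (z + 2 * int i + 1) = S1" by (subst counter_odd[where c = "int i"]) (auto simp: marker_def)
  then have a: "gstep Or ?M (SuccScan, ?T, z + 2 * int i + 1, Q, qh) = (Shift1, ?T', z + 2 * int i, Q, qh)"
    by (simp add: gstep.simps)
  have b: "gstep Or ?M (Shift1, ?T', z + 2 * int i, Q, qh) = (Shift2, ?T', z + 2 * int i - 1, Q, qh)"
    by (simp add: gstep.simps)
  have c: "gstep Or ?M (Shift2, ?T', z + 2 * int i - 1, Q, qh) = (Shift3, ?T2, z + 2 * int i - 2, Q, qh)"
    using T2 by (simp add: gstep.simps)
  have d: "gstep Or ?M (Shift3, ?T2, z + 2 * int i - 2, Q, qh) = (Back True, ?T2, z + 2 * int i - 3, Q, qh)"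
    by (simp add: gstep.simps)
  from reaches_trans[OF succ_find_marker[OF i] reaches_step[OF a reaches_step[OF b reaches_step[OF c reaches_one[OF d]]]]]
  show ?thesis by (simp add: numeral_eq_Suc)
qed

lemma back_to_origin:
  assumes S0: "\<And>c. -1 \<le> c \<Longrightarrow> c \<le> int j - 2 \<Longrightarrow> g c = S0" and "g (-2) = Blank"
  shows "reaches Or (unary_machine M NM) (Back t, tracks z f g, z + 2 * int j - 3, Q, qh)
           (if t then Grow else Count False, tracks z f g, z, Q, qh) (2 * j + 3)"
proof -
  let ?M = "unary_machine M NM"
  let ?T = "tracks z f g"
  have "reaches Or ?M (Back t, ?T, z + 2 * int j - 3, Q, qh)
      (Back t, ?T, z + 2 * int j - 3 + 2 * shift Lft * int j, Q, qh) (2 * j)"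
  proof (rule sweep_track[where A = "{S0}" and Y = "Back1 t"])
    fix m assume "m < j"
    then show "?T (z + 2 * int j - 3 + 2 * shift Lft * int m) \<in> {S0}"
      using S0 by (subst tracks_odd[where c = "int j - 2 - int m"]) auto
  qed auto
  then have w: "reaches Or ?M (Back t, ?T, z + 2 * int j - 3, Q, qh) (Back t, ?T, z - 3, Q, qh) (2 * j)"
    by simp
  have "?T (z - 3) = Blank" using assms(2) by (subst tracks_odd[where c = "-2"]) auto
  then have a: "gstep Or ?M (Back t, ?T, z - 3, Q, qh) = (Back2 t, ?T, z - 2, Q, qh)"
    by (simp add: gstep.simps)
  have b: "gstep Or ?M (Back2 t, ?T, z - 2, Q, qh) = (Back3 t, ?T, z - 1, Q, qh)"
    by (simp add: gstep.simps)
  have c: "gstep Or ?M (Back3 t, ?T, z - 1, Q, qh) = (if t then Grow else Count False, ?T, z, Q, qh)"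
    by (simp add: gstep.simps)
  show ?thesis using reaches_trans[OF w reaches_step[OF a reaches_step[OF b reaches_one[OF c]]]]
    by (simp add: numeral_eq_Suc)
qed

lemma grow_ones:
  "reaches Or (unary_machine M NM) (Grow, tracks z (ones n) g, z, Q, qh)
     (Count False, tracks z (ones (Suc n)) g, z, Q, qh) (4 * n + 4)"
proof -
  let ?M = "unary_machine M NM"
  let ?T = "tracks z (ones n) g"
  let ?T' = "tracks z (ones (Suc n)) g"
  have "reaches Or ?M (Grow, ?T, z, Q, qh) (Grow, ?T, z + 2 * shift Rgt * int n, Q, qh) (2 * n)"
  proof (rule sweep_track[where A = "{S1}" and Y = Grow1])
    fix j assume "j < n"
    then show "?T (z + 2 * shift Rgt * int j) \<in> {S1}"
      by (subst tracks_even[where c = "int j"]) (auto simp: ones_def)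
  qed auto
  then have r1: "reaches Or ?M (Grow, ?T, z, Q, qh) (Grow, ?T, z + 2 * int n, Q, qh) (2 * n)" by simp
  have T': "?T(z + 2 * int n := S1) = ?T'"
    by (subst tracks_upd_even[where c = "int n"]) (simp_all add: ones_snoc)
  have "?T (z + 2 * int n) = Blank" by (subst tracks_even[where c = "int n"]) (auto simp: ones_def)
  then have a: "gstep Or ?M (Grow, ?T, z + 2 * int n, Q, qh) = (Grow2, ?T', z + 2 * int n - 1, Q, qh)"
    using T' by (simp add: gstep.simps)
  have b: "gstep Or ?M (Grow2, ?T', z + 2 * int n - 1, Q, qh) = (GrowBack, ?T', z + 2 * int n - 2, Q, qh)"
    by (simp add: gstep.simps)
  have "reaches Or ?M (GrowBack, ?T', z + 2 * int n - 2, Q, qh)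
      (GrowBack, ?T', z + 2 * int n - 2 + 2 * shift Lft * int n, Q, qh) (2 * n)"
  proof (rule sweep_track[where A = "{S1}" and Y = GrowBack1])
    fix j assume "j < n"
    then show "?T' (z + 2 * int n - 2 + 2 * shift Lft * int j) \<in> {S1}"
      by (subst tracks_even[where c = "int n - 1 - int j"]) (auto simp: ones_def)
  qed auto
  then have r2: "reaches Or ?M (GrowBack, ?T', z + 2 * int n - 2, Q, qh) (GrowBack, ?T', z - 2, Q, qh) (2 * n)"
    by simp
  have "?T' (z - 2) = Blank" by (subst tracks_even[where c = "-1"]) (auto simp: ones_def)
  then have c: "gstep Or ?M (GrowBack, ?T', z - 2, Q, qh) = (GrowBack2, ?T', z - 1, Q, qh)"
    by (simp add: gstep.simps)
  have d: "gstep Or ?M (GrowBack2, ?T', z - 1, Q, qh) = (Count False, ?T', z, Q, qh)"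
    by (simp add: gstep.simps)
  have "reaches Or ?M (Grow, ?T, z, Q, qh) (Count False, ?T', z, Q, qh) (2 * n + Suc (Suc (2 * n + Suc 1)))"
    using reaches_trans[OF r1 reaches_step[OF a reaches_step[OF b reaches_trans[OF r2 reaches_step[OF c reaches_one[OF d]]]]]] .
  then show ?thesis by (rule reaches_mono) simp
qed

lemma counter_succ_pos:
  assumes "0 < i"
  shows "reaches Or (unary_machine M NM) (Succ, counter z (n, i), z, Q, qh)
           (Count False, counter z (Suc n, i - 1), z, Q, qh) (4 * (n + i) + 20)"
proof -
  let ?M = "unary_machine M NM"
  let ?g = "marker (-1) (int i - 1) (int i - 1)"
  have home: "reaches Or ?M (Back True, tracks z (ones n) ?g, z + 2 * int i - 3, Q, qh)
      (Grow, tracks z (ones n) ?g, z, Q, qh) (2 * i + 3)"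
    using back_to_origin[where j = i and g = ?g and t = True] by (simp add: marker_def)
  have run: "reaches Or ?M (Succ, counter z (n, i), z, Q, qh) (Count False, tracks z (ones (Suc n)) ?g, z, Q, qh)
      (2 * i + 5 + (2 * i + 3) + (4 * n + 4))"
    by (rule reaches_trans[OF reaches_trans[OF succ_shift_marker[OF assms] home] grow_ones])
  have "counter z (Suc n, i - 1) = tracks z (ones (Suc n)) ?g"
    using assms unfolding counter_def by (simp add: of_nat_diff)
  then show ?thesis by (simp only:) (rule reaches_mono[OF run], simp)
qed

text \<open>The tape while Wrap turns counter z (n, 0) into counter z (0, n + 1), after c of the ones.\<close>

definition wrap_tape :: "int \<Rightarrow> nat \<Rightarrow> nat \<Rightarrow> int \<Rightarrow> sym" where
  "wrap_tape z n c = tracks z (\<lambda>j. if int c \<le> j \<and> j < int n then S1 else Blank)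
     (\<lambda>j. if -1 \<le> j \<and> j < int c then S0 else if j = 0 then S1 else Blank)"

lemma wrap_loop:
  "c \<le> n \<Longrightarrow> reaches Or (unary_machine M NM) (Wrap, wrap_tape z n 0, z, Q, qh)
     (Wrap, wrap_tape z n c, z + 2 * int c, Q, qh) (2 * c)"
proof (induction c)
  case 0 then show ?case by (simp add: reaches_refl)
next
  case (Suc c)
  let ?M = "unary_machine M NM"
  let ?U = "wrap_tape z n c"
  have IH: "reaches Or ?M (Wrap, wrap_tape z n 0, z, Q, qh) (Wrap, ?U, z + 2 * int c, Q, qh) (2 * c)"
    using Suc by simp
  have "?U (z + 2 * int c) = S1" unfolding wrap_tape_def using Suc.prems by simp
  then have a: "gstep Or ?M (Wrap, ?U, z + 2 * int c, Q, qh)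
      = (Wrap1, ?U(z + 2 * int c := Blank), z + 2 * int c + 1, Q, qh)"
    by (simp add: gstep.simps)
  have "(?U(z + 2 * int c := Blank))(z + 2 * int c + 1 := S0) = wrap_tape z n (Suc c)"
    unfolding wrap_tape_def
    by (subst tracks_upd_even[where c = "int c"], simp, subst tracks_upd_odd[where c = "int c"], simp)
      (auto intro!: arg_cong2[where f = "tracks z"])
  then have b: "gstep Or ?M (Wrap1, ?U(z + 2 * int c := Blank), z + 2 * int c + 1, Q, qh)
      = (Wrap, wrap_tape z n (Suc c), z + 2 * int (Suc c), Q, qh)"
    by (simp add: gstep.simps)
  from reaches_trans[OF IH reaches_step[OF a reaches_one[OF b]]] show ?case by simp
qed

lemma succ_wrap:
  "reaches Or (unary_machine M NM) (Succ, counter z (n, 0), z, Q, qh)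
     (Back False, counter z (0, Suc n), z + 2 * int n + 1, Q, qh) (2 * n + 7)"
proof -
  let ?M = "unary_machine M NM"
  let ?T = "counter z (n, 0)"
  let ?U = "wrap_tape z n n"
  let ?T' = "counter z (0, Suc n)"
  have U0: "wrap_tape z n 0 = ?T" unfolding wrap_tape_def counter_def
    by (rule arg_cong2[where f = "tracks z"]) (auto simp: ones_def marker_def intro!: ext)
  have a: "gstep Or ?M (Succ, ?T, z, Q, qh) = (SuccTest, ?T, z + 1, Q, qh)" by (simp add: gstep.simps)
  have "?T (z + 1) = S1" by (subst counter_odd[where c = 0]) (auto simp: marker_def)
  then have b: "gstep Or ?M (SuccTest, ?T, z + 1, Q, qh) = (Wrap, ?T, z, Q, qh)" by (simp add: gstep.simps)
  have loop: "reaches Or ?M (Wrap, ?T, z, Q, qh) (Wrap, ?U, z + 2 * int n, Q, qh) (2 * n)"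
    using wrap_loop[of n n Or M NM z Q qh] U0 by simp
  have "?U (z + 2 * int n) = Blank" unfolding wrap_tape_def by simp
  then have c: "gstep Or ?M (Wrap, ?U, z + 2 * int n, Q, qh) = (Wrap2, ?U, z + 2 * int n + 1, Q, qh)"
    by (simp add: gstep.simps)
  have d: "gstep Or ?M (Wrap2, ?U, z + 2 * int n + 1, Q, qh)
      = (Wrap3, ?U(z + 2 * int n + 1 := S0), z + 2 * int n + 2, Q, qh)"
    by (simp add: gstep.simps)
  have e: "gstep Or ?M (Wrap3, ?U(z + 2 * int n + 1 := S0), z + 2 * int n + 2, Q, qh)
      = (Wrap4, ?U(z + 2 * int n + 1 := S0), z + 2 * int n + 3, Q, qh)"
    by (simp add: gstep.simps)
  have "(?U(z + 2 * int n + 1 := S0))(z + 2 * int n + 3 := S1) = ?T'"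
    unfolding wrap_tape_def counter_def
    by (subst tracks_upd_odd[where c = "int n"], simp, subst tracks_upd_odd[where c = "int n + 1"], simp)
      (auto simp: ones_def marker_def intro!: arg_cong2[where f = "tracks z"])
  then have f: "gstep Or ?M (Wrap4, ?U(z + 2 * int n + 1 := S0), z + 2 * int n + 3, Q, qh)
      = (Wrap5, ?T', z + 2 * int n + 2, Q, qh)"
    by (simp add: gstep.simps)
  have g: "gstep Or ?M (Wrap5, ?T', z + 2 * int n + 2, Q, qh) = (Back False, ?T', z + 2 * int n + 1, Q, qh)"
    by (simp add: gstep.simps)
  have "reaches Or ?M (Succ, ?T, z, Q, qh) (Back False, ?T', z + 2 * int n + 1, Q, qh) (Suc (Suc (2 * n + 5)))"
    using reaches_step[OF a reaches_step[OF b reaches_trans[OF loop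
        reaches_step[OF c reaches_step[OF d reaches_step[OF e reaches_step[OF f reaches_one[OF g]]]]]]]]
    by (simp add: numeral_eq_Suc)
  then show ?thesis by (rule reaches_mono) simp
qed

lemma counter_succ_zero:
  "reaches Or (unary_machine M NM) (Succ, counter z (n, 0), z, Q, qh)
     (Count False, counter z (0, Suc n), z, Q, qh) (4 * n + 20)"
proof -
  have "reaches Or (unary_machine M NM) (Back False, counter z (0, Suc n), z + 2 * int (n + 2) - 3, Q, qh)
      (Count False, counter z (0, Suc n), z, Q, qh) (2 * (n + 2) + 3)"
    using back_to_origin[where j = "n + 2" and g = "marker (-1) (int (Suc n)) (int (Suc n))" and t = False]
    unfolding counter_def by (simp add: marker_def)
  moreover have "z + 2 * int (n + 2) - 3 = z + 2 * int n + 1" by simp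
  ultimately have "reaches Or (unary_machine M NM) (Back False, counter z (0, Suc n), z + 2 * int n + 1, Q, qh)
      (Count False, counter z (0, Suc n), z, Q, qh) (2 * (n + 2) + 3)" by (simp only:)
  from reaches_trans[OF succ_wrap this] show ?thesis by (rule reaches_mono) simp
qed

lemma counter_succ:
  "reaches Or (unary_machine M NM) (Succ, counter z p, z, Q, qh)
     (Count False, counter z (pair_succ p), z, Q, qh) (4 * (fst p + snd p) + 20)"
proof (cases p)
  case (Pair n i)
  then show ?thesis using counter_succ_pos[of i] counter_succ_zero[of Or M NM z n] by (cases "0 < i") auto
qed

lemma copy_input:
  assumes "c \<le> length x" "\<forall>j<c. x ! j = S1"
  shows "reaches Or (unary_machine M NM) (Copy, init_tape x, 0, (\<lambda>_. Blank), 0)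
     (Copy, (\<lambda>p. if 0 \<le> p \<and> p < int c then Blank else init_tape x p), int c, ones c, int c) c"
  using assms
proof (induction c)
  case 0
  have "(\<lambda>p. if 0 \<le> p \<and> p < int 0 then Blank else init_tape x p) = init_tape x" by (rule ext) auto
  then show ?case by (simp add: reaches_refl ones_0)
next
  case (Suc c)
  let ?W = "\<lambda>p. if 0 \<le> p \<and> p < int c then Blank else init_tape x p"
  have IH: "reaches Or (unary_machine M NM) (Copy, init_tape x, 0, (\<lambda>_. Blank), 0) (Copy, ?W, int c, ones c, int c) c"
    using Suc by simp
  have "?W (int c) = S1" using Suc.prems by (simp add: init_tape_def)
  moreover have "ones c (int c) = Blank" by (simp add: ones_def)
  moreover have "?W(int c := Blank) = (\<lambda>p. if 0 \<le> p \<and> p < int (Suc c) then Blank else init_tape x p)"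
    by (rule ext) auto
  ultimately have "gstep Or (unary_machine M NM) (Copy, ?W, int c, ones c, int c) =
      (Copy, (\<lambda>p. if 0 \<le> p \<and> p < int (Suc c) then Blank else init_tape x p), int (Suc c), ones (Suc c), int (Suc c))"
    by (simp add: gstep.simps ones_snoc)
  from reaches_trans[OF IH reaches_one[OF this]] show ?case by simp
qed

lemma setup_counter:
  "reaches Or (unary_machine M NM) (Copy, init_tape (replicate m S1), 0, (\<lambda>_. Blank), 0)
     (Count False, counter (int m) (0, 0), int m, ones m, int m - 1) (m + 5)"
proof -
  let ?M = "unary_machine M NM"
  let ?z = "int m"
  let ?B = "\<lambda>_ :: int. Blank"
  have "(\<lambda>p. if 0 \<le> p \<and> p < int m then Blank else init_tape (replicate m S1) p) = ?B"
    by (rule ext) (auto simp: init_tape_def)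
  then have copy: "reaches Or ?M (Copy, init_tape (replicate m S1), 0, ?B, 0) (Copy, ?B, ?z, ones m, ?z) m"
    using copy_input[of m "replicate m S1" Or M NM] by simp
  have a: "gstep Or ?M (Copy, ?B, ?z, ones m, ?z) = (Init1, ?B, ?z, ones m, ?z - 1)"
    by (simp add: gstep.simps ones_def)
  have b: "gstep Or ?M (Init1, ?B, ?z, ones m, ?z - 1) = (Init2, ?B, ?z - 1, ones m, ?z - 1)"
    by (simp add: gstep.simps)
  have c: "gstep Or ?M (Init2, ?B, ?z - 1, ones m, ?z - 1) = (Init3, ?B(?z - 1 := S0), ?z, ones m, ?z - 1)"
    by (simp add: gstep.simps)
  have d: "gstep Or ?M (Init3, ?B(?z - 1 := S0), ?z, ones m, ?z - 1) = (Init4, ?B(?z - 1 := S0), ?z + 1, ones m, ?z - 1)"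
    by (simp add: gstep.simps)
  have "(?B(?z - 1 := S0))(?z + 1 := S1) = counter ?z (0, 0)"
    by (rule ext) (auto simp: counter_def tracks_def ones_def marker_def, presburger+)
  then have e: "gstep Or ?M (Init4, ?B(?z - 1 := S0), ?z + 1, ones m, ?z - 1) = (Count False, counter ?z (0, 0), ?z, ones m, ?z - 1)"
    by (simp add: gstep.simps)
  from reaches_trans[OF copy reaches_step[OF a reaches_step[OF b reaches_step[OF c reaches_step[OF d reaches_one[OF e]]]]]]
  show ?thesis by (simp add: numeral_eq_Suc)
qed

lemma count_input:
  "reaches Or (unary_machine M NM) (Count (odd u), counter z (unpair (u div 2)), z, ones r, int r - 1)
     (Count (odd (u + r)), counter z (unpair ((u + r) div 2)), z, ones 0, -1) (r * (4 * (u + r) + 21))"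
proof (induction r arbitrary: u)
  case 0 then show ?case by (simp add: reaches_refl)
next
  case (Suc r)
  let ?M = "unary_machine M NM"
  let ?C = "counter z (unpair (u div 2))"
  have IH: "reaches Or ?M (Count (odd (Suc u)), counter z (unpair (Suc u div 2)), z, ones r, int r - 1)
     (Count (odd (u + Suc r)), counter z (unpair ((u + Suc r) div 2)), z, ones 0, -1) (r * (4 * (u + Suc r) + 21))"
    using Suc.IH[of "Suc u"] by simp
  have q: "ones (Suc r) (int (Suc r) - 1) = S1" "(ones (Suc r))(int (Suc r) - 1 := Blank) = ones r"
    by (auto simp: ones_def)
  have "reaches Or ?M (Count (odd u), ?C, z, ones (Suc r), int (Suc r) - 1)
     (Count (odd (Suc u)), counter z (unpair (Suc u div 2)), z, ones r, int r - 1) (4 * (u + Suc r) + 21)"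
  proof (cases "odd u")
    case True
    have a: "gstep Or ?M (Count (odd u), ?C, z, ones (Suc r), int (Suc r) - 1) = (Succ, ?C, z, ones r, int r - 1)"
      using True q by (simp add: gstep.simps)
    have "fst (unpair (u div 2)) + snd (unpair (u div 2)) \<le> u"
      using unpair_sum_le[of "u div 2"] by simp
    then have "reaches Or ?M (Succ, ?C, z, ones r, int r - 1)
        (Count False, counter z (pair_succ (unpair (u div 2))), z, ones r, int r - 1) (4 * (u + Suc r) + 20)"
      by (intro reaches_mono[OF counter_succ]) simp
    moreover have "pair_succ (unpair (u div 2)) = unpair (Suc u div 2)" using True
      by (simp add: unpair_Suc[symmetric])
    ultimately have "reaches Or ?M (Succ, ?C, z, ones r, int r - 1)
        (Count False, counter z (unpair (Suc u div 2)), z, ones r, int r - 1) (4 * (u + Suc r) + 20)"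
      by (simp only:)
    from reaches_step[OF a this] show ?thesis using True by simp
  next
    case False
    have "gstep Or ?M (Count (odd u), ?C, z, ones (Suc r), int (Suc r) - 1) = (Count True, ?C, z, ones r, int r - 1)"
      using False q by (simp add: gstep.simps)
    then have "reaches Or ?M (Count (odd u), ?C, z, ones (Suc r), int (Suc r) - 1) (Count True, ?C, z, ones r, int r - 1)
        (4 * (u + Suc r) + 21)"
      by (rule reaches_mono[OF reaches_one]) simp
    moreover have "Suc u div 2 = u div 2" "odd (Suc u)" using False by presburger+
    ultimately show ?thesis by simp
  qed
  from reaches_trans[OF this IH] show ?case by (simp add: algebra_simps)
qed

lemma count_unary_input:
  assumes "unpair (m div 2) = (n, i)"
  shows "reaches Or (unary_machine M NM) (init_config Copy (replicate m S1))
     (Count (odd m), counter (int m) (n, i), int m, ones 0, -1) (m + 5 + m * (4 * m + 21))"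
proof -
  have "reaches Or (unary_machine M NM) (Count False, counter (int m) (0, 0), int m, ones m, int m - 1)
      (Count (odd m), counter (int m) (unpair (m div 2)), int m, ones 0, -1) (m * (4 * m + 21))"
    using count_input[where u = 0 and r = m and z = "int m"] by (simp add: unpair_def)
  from reaches_trans[OF setup_counter this] show ?thesis using assms unfolding init_config_def by simp
qed

fun sim_config :: "int \<Rightarrow> nat \<Rightarrow> bool \<Rightarrow> int \<Rightarrow> int \<Rightarrow> conf \<Rightarrow> ustate config" where
  "sim_config z i b lo hi (q, t1, h1, t2, h2) = (Sim q b, tracks z t1 (marker lo hi (int i)), z + 2 * h1, t2, h2)"

definition marker_covers :: "int \<Rightarrow> int \<Rightarrow> nat \<Rightarrow> int \<Rightarrow> bool" where
  "marker_covers lo hi i h \<longleftrightarrow> lo \<le> h - 1 \<and> h \<le> hi \<and> lo \<le> int i \<and> int i \<le> hi"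

lemma marker_extend_right:
  assumes "marker_covers lo hi i h"
  shows "(marker lo hi (int i))(h + 1 := (if marker lo hi (int i) (h + 1) = Blank then Hash else marker lo hi (int i) (h + 1)))
     = marker lo (max hi (h + 1)) (int i)"
  using assms unfolding marker_covers_def by (intro ext) (auto simp: marker_def)

lemma marker_extend_left:
  assumes "marker_covers lo hi i h"
  shows "(marker lo hi (int i))(h - 2 := (if marker lo hi (int i) (h - 2) = Blank then S0 else marker lo hi (int i) (h - 2)))
     = marker (min lo (h - 2)) hi (int i)"
  using assms unfolding marker_covers_def by (intro ext) (auto simp: marker_def)

lemma simulate_move_right:
  assumes q: "q < NM" and M: "M q (t1 h1) (t2 h2) = Move q' s1 Rgt s2 d2" and inv: "marker_covers lo hi i h1"
  shows "reaches Or (unary_machine M NM) (sim_config z i b lo hi (q, t1, h1, t2, h2))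
           (sim_config z i b lo (max hi (h1 + 1)) (step Or M (q, t1, h1, t2, h2))) 4"
proof -
  let ?M = "unary_machine M NM"
  let ?g = "marker lo hi (int i)"
  let ?t1 = "t1(h1 := s1)"
  let ?D = "tracks z ?t1 ?g"
  let ?t2 = "t2(h2 := s2)"
  let ?h2 = "mv d2 h2"
  have a: "gstep Or ?M (sim_config z i b lo hi (q, t1, h1, t2, h2)) = (SimR1 q' b, ?D, z + 2 * h1 + 1, ?t2, ?h2)"
    using q M by (simp add: gstep.simps tracks_upd_even[where c = h1])
  have b: "gstep Or ?M (SimR1 q' b, ?D, z + 2 * h1 + 1, ?t2, ?h2) = (SimR2 q' b, ?D, z + 2 * h1 + 2, ?t2, ?h2)"
    by (simp add: gstep.simps)
  have c: "gstep Or ?M (SimR2 q' b, ?D, z + 2 * h1 + 2, ?t2, ?h2) = (SimR3 q' b, ?D, z + 2 * h1 + 3, ?t2, ?h2)"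
    by (simp add: gstep.simps)
  have "?D (z + 2 * h1 + 3) = ?g (h1 + 1)" by (rule tracks_odd) simp
  moreover have "?D(z + 2 * h1 + 3 := (if ?g (h1 + 1) = Blank then Hash else ?g (h1 + 1)))
      = tracks z ?t1 (marker lo (max hi (h1 + 1)) (int i))"
    by (subst tracks_upd_odd[where c = "h1 + 1"]) (simp_all add: marker_extend_right[OF inv])
  ultimately have d: "gstep Or ?M (SimR3 q' b, ?D, z + 2 * h1 + 3, ?t2, ?h2)
      = sim_config z i b lo (max hi (h1 + 1)) (q', ?t1, h1 + 1, ?t2, ?h2)"
    by (simp add: gstep.simps)
  have "step Or M (q, t1, h1, t2, h2) = (q', ?t1, h1 + 1, ?t2, ?h2)" using M by simp
  then show ?thesis using reaches_step[OF a reaches_step[OF b reaches_step[OF c reaches_one[OF d]]]]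
    by (simp add: numeral_eq_Suc)
qed

lemma simulate_move_left:
  assumes q: "q < NM" and M: "M q (t1 h1) (t2 h2) = Move q' s1 Lft s2 d2" and inv: "marker_covers lo hi i h1"
  shows "reaches Or (unary_machine M NM) (sim_config z i b lo hi (q, t1, h1, t2, h2))
           (sim_config z i b (min lo (h1 - 2)) hi (step Or M (q, t1, h1, t2, h2))) 4"
proof -
  let ?M = "unary_machine M NM"
  let ?g = "marker lo hi (int i)"
  let ?t1 = "t1(h1 := s1)"
  let ?D = "tracks z ?t1 ?g"
  let ?t2 = "t2(h2 := s2)"
  let ?h2 = "mv d2 h2"
  have a: "gstep Or ?M (sim_config z i b lo hi (q, t1, h1, t2, h2)) = (SimL1 q' b, ?D, z + 2 * h1 - 1, ?t2, ?h2)"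
    using q M by (simp add: gstep.simps tracks_upd_even[where c = h1])
  have b: "gstep Or ?M (SimL1 q' b, ?D, z + 2 * h1 - 1, ?t2, ?h2) = (SimL2 q' b, ?D, z + 2 * h1 - 2, ?t2, ?h2)"
    by (simp add: gstep.simps)
  have c: "gstep Or ?M (SimL2 q' b, ?D, z + 2 * h1 - 2, ?t2, ?h2) = (SimL3 q' b, ?D, z + 2 * h1 - 3, ?t2, ?h2)"
    by (simp add: gstep.simps)
  have "?D (z + 2 * h1 - 3) = ?g (h1 - 2)" by (rule tracks_odd) simp
  moreover have "?D(z + 2 * h1 - 3 := (if ?g (h1 - 2) = Blank then S0 else ?g (h1 - 2)))
      = tracks z ?t1 (marker (min lo (h1 - 2)) hi (int i))"
    by (subst tracks_upd_odd[where c = "h1 - 2"]) (simp_all add: marker_extend_left[OF inv])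
  ultimately have d: "gstep Or ?M (SimL3 q' b, ?D, z + 2 * h1 - 3, ?t2, ?h2)
      = sim_config z i b (min lo (h1 - 2)) hi (q', ?t1, h1 - 1, ?t2, ?h2)"
    by (simp add: gstep.simps)
  have "step Or M (q, t1, h1, t2, h2) = (q', ?t1, h1 - 1, ?t2, ?h2)" using M by simp
  then show ?thesis using reaches_step[OF a reaches_step[OF b reaches_step[OF c reaches_one[OF d]]]]
    by (simp add: numeral_eq_Suc)
qed

lemma simulate_step:
  assumes q: "q < NM" and "stop_of M (q, t1, h1, t2, h2) = None" and inv: "marker_covers lo hi i h1"
  shows "\<exists>lo' hi'. reaches Or (unary_machine M NM) (sim_config z i b lo hi (q, t1, h1, t2, h2))
            (sim_config z i b lo' hi' (step Or M (q, t1, h1, t2, h2))) 4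
          \<and> marker_covers lo' hi' i (work_head (step Or M (q, t1, h1, t2, h2)))"
proof (cases "M q (t1 h1) (t2 h2)")
  case (Move q' s1 d1 s2 d2)
  show ?thesis
  proof (cases d1)
    case Stay
    then have "gstep Or (unary_machine M NM) (sim_config z i b lo hi (q, t1, h1, t2, h2))
        = sim_config z i b lo hi (step Or M (q, t1, h1, t2, h2))"
      using q Move by (simp add: gstep.simps tracks_upd_even[where c = h1])
    then show ?thesis using inv Move Stay
      by (intro exI[of _ lo] exI[of _ hi]) (auto intro: reaches_mono[OF reaches_one])
  next
    case Rgt
    then show ?thesis using simulate_move_right[OF q _ inv] Move inv unfolding marker_covers_def
      by (intro exI[of _ lo] exI[of _ "max hi (h1 + 1)"]) auto
  next
    case Lft
    then show ?thesis using simulate_move_left[OF q _ inv] Move inv unfolding marker_covers_def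
      by (intro exI[of _ "min lo (h1 - 2)"] exI[of _ hi]) auto
  qed
next
  case (Ask j qy qn)
  then have "gstep Or (unary_machine M NM) (sim_config z i b lo hi (q, t1, h1, t2, h2))
      = sim_config z i b lo hi (step Or M (q, t1, h1, t2, h2))"
    using q by (simp add: gstep.simps)
  then show ?thesis using inv Ask
    by (intro exI[of _ lo] exI[of _ hi]) (auto intro: reaches_mono[OF reaches_one])
next
  case (Stop x)
  then show ?thesis using assms(2) by simp
qed

lemma simulate_run:
  assumes wf: "wf_otm NM M" and c0: "fst c0 < NM" "marker_covers lo0 hi0 i (work_head c0)"
    and running: "\<forall>t'<t. stop_of M ((step Or M ^^ t') c0) = None"
  shows "\<exists>lo hi. reaches Or (unary_machine M NM) (sim_config z i b lo0 hi0 c0) (sim_config z i b lo hi ((step Or M ^^ t) c0)) (4 * t)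
     \<and> marker_covers lo hi i (work_head ((step Or M ^^ t) c0))"
  using running
proof (induction t)
  case 0 then show ?case using c0 by (auto intro: reaches_refl)
next
  case (Suc t)
  then obtain lo hi where IH: "reaches Or (unary_machine M NM) (sim_config z i b lo0 hi0 c0) (sim_config z i b lo hi ((step Or M ^^ t) c0)) (4 * t)"
      "marker_covers lo hi i (work_head ((step Or M ^^ t) c0))" by auto
  obtain q t1 h1 t2 h2 where ct: "(step Or M ^^ t) c0 = (q, t1, h1, t2, h2)" by (cases "(step Or M ^^ t) c0") auto
  have q: "q < NM" using wf_otm_steps[OF wf c0(1), where Or = Or and t = t] ct by simp
  have "stop_of M (q, t1, h1, t2, h2) = None" using Suc.prems ct by (metis lessI)
  moreover have "marker_covers lo hi i h1" using IH(2) ct by simp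
  ultimately obtain lo' hi' where st: "reaches Or (unary_machine M NM) (sim_config z i b lo hi (q, t1, h1, t2, h2))
            (sim_config z i b lo' hi' (step Or M (q, t1, h1, t2, h2))) 4"
          "marker_covers lo' hi' i (work_head (step Or M (q, t1, h1, t2, h2)))"
    using simulate_step[OF q] by blast
  have "(step Or M ^^ Suc t) c0 = step Or M (q, t1, h1, t2, h2)" using ct by simp
  then show ?case using reaches_trans[OF IH(1)[unfolded ct] st(1)] st(2)
    by (intro exI[of _ lo'] exI[of _ hi']) (simp add: algebra_simps)
qed

lemma seek_marker:
  assumes "marker_covers lo hi i h"
  shows "reaches Or (unary_machine M NM) (Seek b, tracks z W (marker lo hi (int i)), z + 2 * h + 1, tq, hq)
     (Seek b, tracks z W (marker lo hi (int i)), z + 2 * int i + 1, tq, hq) (2 * nat \<bar>h - int i\<bar>)"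
proof -
  let ?M = "unary_machine M NM"
  let ?D = "tracks z W (marker lo hi (int i))"
  show ?thesis
  proof (cases "h < int i")
    case True
    have "reaches Or ?M (Seek b, ?D, z + 2 * h + 1, tq, hq)
        (Seek b, ?D, z + 2 * h + 1 + 2 * shift Rgt * int (nat (int i - h)), tq, hq) (2 * nat (int i - h))"
    proof (rule sweep_track[where A = "{S0}" and Y = "SeekR b"])
      fix j assume "j < nat (int i - h)"
      then show "?D (z + 2 * h + 1 + 2 * shift Rgt * int j) \<in> {S0}" using assms unfolding marker_covers_def
        by (subst tracks_odd[where c = "h + int j"]) (auto simp: marker_def)
    qed auto
    moreover have "nat (int i - h) = nat \<bar>h - int i\<bar>" "z + 2 * h + 1 + 2 * shift Rgt * int (nat (int i - h)) = z + 2 * int i + 1"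
      using True by simp_all
    ultimately show ?thesis by (simp only:)
  next
    case False
    have "reaches Or ?M (Seek b, ?D, z + 2 * h + 1, tq, hq)
        (Seek b, ?D, z + 2 * h + 1 + 2 * shift Lft * int (nat (h - int i)), tq, hq) (2 * nat (h - int i))"
    proof (rule sweep_track[where A = "{Hash}" and Y = "SeekL b"])
      fix j assume "j < nat (h - int i)"
      then show "?D (z + 2 * h + 1 + 2 * shift Lft * int j) \<in> {Hash}" using assms unfolding marker_covers_def
        by (subst tracks_odd[where c = "h - int j"]) (auto simp: marker_def)
    qed auto
    moreover have "nat (h - int i) = nat \<bar>h - int i\<bar>" "z + 2 * h + 1 + 2 * shift Lft * int (nat (h - int i)) = z + 2 * int i + 1"
      using False by simp_all
    ultimately show ?thesis by (simp only:)
  qed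
qed

lemma read_marked_cell:
  assumes q: "q < NM" and halt: "M q (W h) (tq hq) = Stop bb" and inv: "marker_covers lo hi i h"
  shows "\<exists>r. reaches Or (unary_machine M NM) (sim_config z i b lo hi (q, W, h, tq, hq)) r (2 * nat \<bar>h - int i\<bar> + 2)
           \<and> gstop_of (unary_machine M NM) r = Some (sym_bit b (W (int i)))"
proof -
  let ?M = "unary_machine M NM"
  let ?D = "tracks z W (marker lo hi (int i))"
  have a: "gstep Or ?M (sim_config z i b lo hi (q, W, h, tq, hq)) = (Seek b, ?D, z + 2 * h + 1, tq, hq)"
    using q halt by (simp add: gstep.simps)
  have "?D (z + 2 * int i + 1) = S1" using inv unfolding marker_covers_def by (simp add: marker_def)
  then have c: "gstep Or ?M (Seek b, ?D, z + 2 * int i + 1, tq, hq) = (ReadBit b, ?D, z + 2 * int i, tq, hq)"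
    by (simp add: gstep.simps)
  have "reaches Or ?M (sim_config z i b lo hi (q, W, h, tq, hq)) (ReadBit b, ?D, z + 2 * int i, tq, hq)
      (2 * nat \<bar>h - int i\<bar> + 2)"
    using reaches_step[OF a reaches_trans[OF seek_marker[OF inv] reaches_one[OF c]]] by simp
  moreover have "gstop_of ?M (ReadBit b, ?D, z + 2 * int i, tq, hq) = Some (sym_bit b (W (int i)))"
    by simp
  ultimately show ?thesis by blast
qed

lemma simulate_and_read:
  assumes wf: "wf_otm NM M" and adv: "computes_advice_in Or M k a"
  shows "\<exists>r. reaches Or (unary_machine M NM)
             (sim_config z i b (-1) (int i) (0, init_tape (replicate n S1), 0, (\<lambda>_. Blank), 0)) r
             (6 * halt_time Or M n + 2 * i + 2)
           \<and> gstop_of (unary_machine M NM) r = Some (sym_bit b (final_tape Or M n (int i)))"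
proof -
  let ?c0 = "(0::nat, init_tape (replicate n S1), 0::int, (\<lambda>_::int. Blank), 0::int)"
  let ?T = "halt_time Or M n"
  have NM: "0 < NM" using wf unfolding wf_otm_def by simp
  have running: "\<forall>t<?T. stop_of M ((step Or M ^^ t) ?c0) = None"
    using not_stopped_before_halt_time[of _ Or M n] unfolding run_def by simp
  have c0: "fst ?c0 < NM" "marker_covers (-1) (int i) i (work_head ?c0)"
    using NM by (simp_all add: marker_covers_def)
  obtain lo hi where sim:
      "reaches Or (unary_machine M NM) (sim_config z i b (-1) (int i) ?c0) (sim_config z i b lo hi ((step Or M ^^ ?T) ?c0)) (4 * ?T)"
      "marker_covers lo hi i (work_head ((step Or M ^^ ?T) ?c0))"
    using simulate_run[OF wf c0 running, of z b] by blast
  obtain q W h tq hq where cT: "(step Or M ^^ ?T) ?c0 = (q, W, h, tq, hq)"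
    by (cases "(step Or M ^^ ?T) ?c0") auto
  have "stop_of M (q, W, h, tq, hq) \<noteq> None" using stopped_at_halt_time[OF adv, of n] cT unfolding run_def by simp
  then obtain bb where halt: "M q (W h) (tq hq) = Stop bb" by (cases "M q (W h) (tq hq)") auto
  have q: "q < NM" using wf_otm_steps[OF wf, where c = ?c0 and Or = Or and t = ?T] NM cT by simp
  have inv: "marker_covers lo hi i h" using sim(2) cT by simp
  obtain r where r: "reaches Or (unary_machine M NM) (sim_config z i b lo hi (q, W, h, tq, hq)) r (2 * nat \<bar>h - int i\<bar> + 2)"
      "gstop_of (unary_machine M NM) r = Some (sym_bit b (W (int i)))"
    using read_marked_cell[where M = M and q = q and W = W and h = h and tq = tq and hq = hq, OF q halt inv] by blast
  have "\<bar>h\<bar> \<le> int ?T" using work_head_steps[where Or = Or and M = M and t = ?T and c = ?c0] cT by simp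
  then have "4 * ?T + (2 * nat \<bar>h - int i\<bar> + 2) \<le> 6 * ?T + 2 * i + 2" by linarith
  moreover have "W = final_tape Or M n" unfolding final_tape_def run_def using cT by simp
  ultimately show ?thesis using reaches_mono[OF reaches_trans[OF sim(1)[unfolded cT] r(1)]] r(2)
    by (intro exI[of _ r]) simp
qed

lemma const_mult_le_power:
  fixes X :: nat
  assumes "c \<le> 2 ^ e" "2 \<le> X"
  shows "c * X ^ a \<le> X ^ (a + e)"
proof -
  have "c \<le> X ^ e" using assms(1) power_mono[OF assms(2), of e] by simp
  then show ?thesis using mult_le_mono1[of c "X ^ e" "X ^ a"] by (simp add: power_add)
qed

lemma unary_time_bound:
  fixes m i T k :: nat
  assumes "i \<le> m" "T \<le> (m + 2) ^ k"
  shows "m + 5 + m * (4 * m + 21) + Suc (6 * T + 2 * i + 2) \<le> (m + 2) ^ (k + 8)"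
proof -
  let ?X = "m + 2"
  have "m + 5 + m * (4 * m + 21) + Suc (6 * T + 2 * i + 2) \<le> 30 * ?X ^ 2 + 6 * ?X ^ k"
    using assms by (simp add: power2_eq_square algebra_simps)
  also have "\<dots> \<le> 36 * ?X ^ (k + 2)"
    using power_increasing[of 2 "k + 2" ?X] power_increasing[of k "k + 2" ?X] by simp
  also have "\<dots> \<le> ?X ^ (k + 2 + 6)" by (rule const_mult_le_power) simp_all
  also have "\<dots> = ?X ^ (k + 8)" by simp
  finally show ?thesis .
qed

lemma unary_machine_on_unary:
  assumes wf: "wf_otm NM M" and adv: "computes_advice_in Or M k a"
  shows "\<exists>r. reaches Or (unary_machine M NM) (init_config Copy (replicate m S1)) r ((m + 2) ^ (k + 8))
           \<and> gstop_of (unary_machine M NM) r = Some (replicate m S1 \<in> advice_lang Or M)"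
proof -
  obtain n i where ni: "unpair (m div 2) = (n, i)" by (cases "unpair (m div 2)")
  then have "n + i \<le> m" using unpair_sum_le[of "m div 2"] by simp
  let ?c0 = "(0::nat, init_tape (replicate n S1), 0::int, (\<lambda>_::int. Blank), 0::int)"
  have start: "gstep Or (unary_machine M NM) (Count (odd m), counter (int m) (n, i), int m, ones 0, -1)
      = sim_config (int m) i (odd m) (-1) (int i) ?c0"
    using ones_init[of n] by (simp add: gstep.simps counter_def ones_0 content_blank)
  obtain r where r: "reaches Or (unary_machine M NM) (sim_config (int m) i (odd m) (-1) (int i) ?c0) r
      (6 * halt_time Or M n + 2 * i + 2)"
      "gstop_of (unary_machine M NM) r = Some (sym_bit (odd m) (final_tape Or M n (int i)))"
    using simulate_and_read[OF wf adv] by blast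
  have "halt_time Or M n \<le> (n + 2) ^ k" by (rule halt_time_le[OF adv])
  also have "\<dots> \<le> (m + 2) ^ k" using \<open>n + i \<le> m\<close> by (intro power_mono) simp_all
  finally have "m + 5 + m * (4 * m + 21) + Suc (6 * halt_time Or M n + 2 * i + 2) \<le> (m + 2) ^ (k + 8)"
    using \<open>n + i \<le> m\<close> by (intro unary_time_bound) simp_all
  then have "reaches Or (unary_machine M NM) (init_config Copy (replicate m S1)) r ((m + 2) ^ (k + 8))"
    using reaches_mono[OF reaches_trans[OF count_unary_input[OF ni] reaches_step[OF start r(1)]]] by blast
  moreover have "replicate m S1 \<in> advice_lang Or M \<longleftrightarrow> sym_bit (odd m) (final_tape Or M n (int i))"
    using advice_lang_iff ni by simp
  ultimately show ?thesis using r(2) by (intro exI[of _ r]) simp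
qed

lemma unary_machine_rejects:
  assumes x: "nonblank x" and c: "c < length x" "x ! c \<noteq> S1" "\<forall>j<c. x ! j = S1"
  shows "\<exists>r. reaches Or (unary_machine M NM) (init_config Copy x) r c \<and> gstop_of (unary_machine M NM) r = Some False"
proof -
  let ?W = "\<lambda>p. if 0 \<le> p \<and> p < int c then Blank else init_tape x p"
  have "reaches Or (unary_machine M NM) (init_config Copy x) (Copy, ?W, int c, ones c, int c) c"
    using copy_input[of c x Or M NM] c unfolding init_config_def by simp
  moreover have "?W (int c) = x ! c" using c(1) by (simp add: init_tape_def)
  moreover have "x ! c \<noteq> Blank" using x c(1) unfolding nonblank_def by (simp add: nth_nonblank)
  ultimately show ?thesis using c(2) by (intro exI[of _ "(Copy, ?W, int c, ones c, int c)"]) simp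
qed

lemma unary_machine_decides:
  assumes wf: "wf_otm NM M" and adv: "computes_advice_in Or M k a"
  shows "gdecides_in Or (unary_machine M NM) Copy (k + 8) (advice_lang Or M)"
  unfolding gdecides_in_def
proof (intro allI impI)
  fix x assume x: "nonblank x"
  show "\<exists>r. reaches Or (unary_machine M NM) (init_config Copy x) r ((length x + 2) ^ (k + 8))
      \<and> gstop_of (unary_machine M NM) r = Some (x \<in> advice_lang Or M)"
  proof (cases "\<forall>j<length x. x ! j = S1")
    case True
    then have "x = replicate (length x) S1" by (intro nth_equalityI) auto
    then show ?thesis using unary_machine_on_unary[OF wf adv, of "length x"] by metis
  next
    case False
    define c where "c = (LEAST c. c < length x \<and> x ! c \<noteq> S1)"
    have c: "c < length x" "x ! c \<noteq> S1" "\<forall>j<c. x ! j = S1"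
      using False LeastI_ex[of "\<lambda>c. c < length x \<and> x ! c \<noteq> S1"] not_less_Least[of _ "\<lambda>c. c < length x \<and> x ! c \<noteq> S1"]
      unfolding c_def[symmetric] by (auto dest: order.strict_trans)
    have "x \<notin> advice_lang Or M" using c(1,2) unfolding advice_lang_def by auto
    moreover have "c \<le> (length x + 2) ^ (k + 8)"
      using c(1) self_le_power[of "length x + 2" "k + 8"] by simp
    moreover obtain r where "reaches Or (unary_machine M NM) (init_config Copy x) r c"
        "gstop_of (unary_machine M NM) r = Some False"
      using unary_machine_rejects[OF x c] by blast
    ultimately show ?thesis by (intro exI[of _ r]) (simp add: reaches_mono)
  qed
qed

definition ustates :: "nat \<Rightarrow> ustate set" where
  "ustates NM = {Copy, Init1, Init2, Init3, Init4, Succ, SuccTest, SuccScan, SuccScan1, Shift1, Shift2, Shift3,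
       Grow, Grow1, Grow2, GrowBack, GrowBack1, GrowBack2, Wrap, Wrap1, Wrap2, Wrap3, Wrap4, Wrap5}
     \<union> (\<Union>b. {Count b, Back b, Back1 b, Back2 b, Back3 b, Seek b, SeekR b, SeekL b, ReadBit b})
     \<union> (\<Union>b. \<Union>q\<in>{..<NM}. {Sim q b, SimR1 q b, SimR2 q b, SimR3 q b, SimL1 q b, SimL2 q b, SimL3 q b})"

lemma finite_ustates: "finite (ustates NM)"
  unfolding ustates_def by simp

lemma closed_ustates:
  assumes wf: "wf_otm NM M"
  shows "closed_states (ustates NM) (unary_machine M NM)"
  unfolding closed_states_def
proof (intro ballI allI)
  fix s a c assume s: "s \<in> ustates NM"
  have NM: "0 < NM" using wf unfolding wf_otm_def by simp
  show "instr_targets (unary_machine M NM s a c) \<subseteq> ustates NM"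
  proof (cases s)
    case (Sim q b)
    then have q: "q < NM" using s unfolding ustates_def by auto
    then have "\<forall>q'\<in>targets (M q a c). q' < NM" using wf unfolding wf_otm_def by blast
    then show ?thesis using Sim q by (cases "M q a c") (auto simp: ustates_def split: dir.splits)
  qed (use s NM in \<open>auto simp: ustates_def\<close>)
qed

lemma advice_lang_in_Unary_P_rel:
  assumes "LB \<in> B" "wf_otm N M" "computes_advice_in (\<lambda>_. LB) M k a"
  shows "advice_lang (\<lambda>_. LB) M \<in> Unary (P_rel B)"
proof -
  have "P_oracle (\<lambda>_. LB) (advice_lang (\<lambda>_. LB) M)"
  proof (rule P_oracle_of_gtm[OF finite_ustates _ closed_ustates[OF assms(2)] unary_machine_decides[OF assms(2,3)]])
    show "Copy \<in> ustates N" unfolding ustates_def by simp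
    show "\<forall>w\<in>advice_lang (\<lambda>_. LB) M. nonblank w" unfolding advice_lang_def nonblank_def by auto
  qed
  then show ?thesis using assms(1) unfolding Unary_def P_rel_def advice_lang_def by blast
qed

section \<open>The polynomial-time machine with oracles LE and LF\<close>

datatype mstate = CheckInput | Rewind0 bool bool | Rewind bool bool | PadInput bool bool | PadInput1 bool bool
  | Rewind2 bool bool | Outer bool bool | Inner sym bool bool | Inner1 sym bool bool | Restore sym bool bool
  | AskOdd bool | Decode bool bool | Final0 | Final | CopyQuery | Accept | Reject

fun sym_of_bits :: "bool \<Rightarrow> bool \<Rightarrow> sym" where
  "sym_of_bits False False = Blank" | "sym_of_bits True False = S1"
| "sym_of_bits False True = S0" | "sym_of_bits True True = Hash"

lemma sym_of_bits_sym_bit: "sym_of_bits (sym_bit False s) (sym_bit True s) = s"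
  by (cases s) auto

text \<open>On input x, CheckInput appends # (and rejects inputs containing #).  Then the work tape holds
  x#p, p a prefix of the advice a(|x|).  With E = tri (|x| + |p|) + |x| the number of the pair
  (|x|, |p|), PadInput writes two ones per symbol of x on the query tape and the Outer loop two
  ones per cell left of each cell of x#p, giving 1^(2E).  The queries 1^(2E) and 1^(2E+1) to
  oracle 1 return the code of the next advice symbol, which Decode appends unless it is Blank;
  then Final copies x#p to the query tape and asks oracle 0.  In Rewind0 b e, the flag b tells
  whether the first bit e is known already.\<close>

fun main_machine :: "mstate gtm" where
  "main_machine CheckInput a c =
     (if a = Blank then Go (Rewind0 False False) Hash Rgt c Stay
      else if a = Hash then Halt False else Go CheckInput a Rgt c Stay)"
| "main_machine (Rewind0 b e) a c = Go (Rewind b e) a Lft c Stay"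
| "main_machine (Rewind b e) a c = (if a = Blank then Go (PadInput b e) a Rgt c Stay else Go (Rewind b e) a Lft c Stay)"
| "main_machine (PadInput b e) a c = (if a = Hash then Go (Rewind2 b e) a Lft c Stay else Go (PadInput1 b e) a Stay S1 Rgt)"
| "main_machine (PadInput1 b e) a c = Go (PadInput b e) a Rgt S1 Rgt"
| "main_machine (Rewind2 b e) a c = (if a = Blank then Go (Outer b e) a Rgt c Stay else Go (Rewind2 b e) a Lft c Stay)"
| "main_machine (Outer b e) a c =
     (if a = Blank then (if b then Go (AskOdd e) a Stay S1 Rgt else Query 1 (Rewind0 True True) (Rewind0 True False))
      else Go (Inner a b e) Blank Lft c Stay)"
| "main_machine (Inner s b e) a c = (if a = Blank then Go (Restore s b e) a Rgt c Stay else Go (Inner1 s b e) a Stay S1 Rgt)"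
| "main_machine (Inner1 s b e) a c = Go (Inner s b e) a Lft S1 Rgt"
| "main_machine (Restore s b e) a c = (if a = Blank then Go (Outer b e) s Rgt c Stay else Go (Restore s b e) a Rgt c Stay)"
| "main_machine (AskOdd e) a c = Query 1 (Decode e True) (Decode e False)"
| "main_machine (Decode e f) a c =
     (if sym_of_bits e f = Blank then Go Final0 a Stay c Stay else Go (Rewind0 False False) (sym_of_bits e f) Rgt c Stay)"
| "main_machine Final0 a c = Go Final a Lft c Stay"
| "main_machine Final a c = (if a = Blank then Go CopyQuery a Rgt c Stay else Go Final a Lft c Stay)"
| "main_machine CopyQuery a c = (if a = Blank then Query 0 Accept Reject else Go CopyQuery a Rgt a Rgt)"
| "main_machine Accept a c = Halt True"
| "main_machine Reject a c = Halt False"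

lemma sym_eq_S1I: "s \<noteq> Blank \<Longrightarrow> s \<noteq> S0 \<Longrightarrow> s \<noteq> Hash \<Longrightarrow> s = S1"
  by (cases s) auto

lemma finite_mstate: "finite (UNIV :: mstate set)"
proof -
  let ?S = "{Blank, S0, S1, Hash}"
  let ?A = "{CheckInput, Final0, Final, CopyQuery, Accept, Reject} \<union> range (case_prod Rewind0) \<union> range (case_prod Rewind)
     \<union> range (case_prod PadInput) \<union> range (case_prod PadInput1) \<union> range (case_prod Rewind2)
     \<union> range (case_prod Outer) \<union> range (case_prod Decode) \<union> range AskOdd
     \<union> (\<lambda>(s, b, e). Inner s b e) ` (?S \<times> UNIV) \<union> (\<lambda>(s, b, e). Inner1 s b e) ` (?S \<times> UNIV)
     \<union> (\<lambda>(s, b, e). Restore s b e) ` (?S \<times> UNIV)"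
  have "UNIV \<subseteq> ?A"
  proof
    fix m :: mstate
    show "m \<in> ?A" by (cases m) (auto simp: image_iff intro: sym_eq_S1I)
  qed
  moreover have "finite ?A" by simp
  ultimately show ?thesis by (rule finite_subset)
qed

lemma pad_input:
  assumes "\<forall>j<k. w ! j \<in> {S0, S1}" "k \<le> length w"
  shows "reaches Or main_machine (PadInput b e, init_tape w, 0, ones 0, 0)
     (PadInput b e, init_tape w, int k, ones (2 * k), int (2 * k)) (2 * k)"
  using assms
proof (induction k)
  case 0 then show ?case by (simp add: reaches_refl)
next
  case (Suc k)
  then have IH: "reaches Or main_machine (PadInput b e, init_tape w, 0, ones 0, 0)
      (PadInput b e, init_tape w, int k, ones (2 * k), int (2 * k)) (2 * k)"
    by simp
  have "init_tape w (int k) \<in> {S0, S1}" using Suc.prems init_tape_nth[of k w] by simp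
  then have a: "gstep Or main_machine (PadInput b e, init_tape w, int k, ones (2 * k), int (2 * k))
      = (PadInput1 b e, init_tape w, int k, ones (2 * k + 1), int (2 * k + 1))"
    using ones_snoc[of "2 * k"] by (auto simp: gstep.simps)
  have b: "gstep Or main_machine (PadInput1 b e, init_tape w, int k, ones (2 * k + 1), int (2 * k + 1))
      = (PadInput b e, init_tape w, int (Suc k), ones (2 * Suc k), int (2 * Suc k))"
    using ones_snoc[of "2 * k + 1"] by (auto simp: gstep.simps)
  from reaches_trans[OF IH reaches_step[OF a reaches_one[OF b]]] show ?case by simp
qed

lemma inner_ones:
  assumes "\<forall>j<k. tp (h - int j) \<noteq> Blank"
  shows "reaches Or main_machine (Inner s b e, tp, h, ones Q, int Q)
     (Inner s b e, tp, h - int k, ones (Q + 2 * k), int (Q + 2 * k)) (2 * k)"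
  using assms
proof (induction k)
  case 0 then show ?case by (simp add: reaches_refl)
next
  case (Suc k)
  then have IH: "reaches Or main_machine (Inner s b e, tp, h, ones Q, int Q)
      (Inner s b e, tp, h - int k, ones (Q + 2 * k), int (Q + 2 * k)) (2 * k)"
    by simp
  have "tp (h - int k) \<noteq> Blank" using Suc.prems by simp
  then have a: "gstep Or main_machine (Inner s b e, tp, h - int k, ones (Q + 2 * k), int (Q + 2 * k))
      = (Inner1 s b e, tp, h - int k, ones (Q + 2 * k + 1), int (Q + 2 * k + 1))"
    using ones_snoc[of "Q + 2 * k"] by (auto simp: gstep.simps)
  have b: "gstep Or main_machine (Inner1 s b e, tp, h - int k, ones (Q + 2 * k + 1), int (Q + 2 * k + 1))
      = (Inner s b e, tp, h - int (Suc k), ones (Q + 2 * Suc k), int (Q + 2 * Suc k))"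
    using ones_snoc[of "Q + 2 * k + 1"] by (auto simp: gstep.simps)
  from reaches_trans[OF IH reaches_step[OF a reaches_one[OF b]]] show ?case by simp
qed

lemma outer_mark_prefix:
  assumes bl: "Blank \<notin> set w" and p: "p < length w"
  shows "reaches Or main_machine (Outer b e, init_tape w, int p, ones Q, int Q)
     (Restore (w ! p) b e, (init_tape w)(int p := Blank), 0, ones (Q + 2 * p), int (Q + 2 * p)) (2 * p + 2)"
proof -
  let ?s = "w ! p"
  let ?T = "(init_tape w)(int p := Blank)"
  have "?s \<noteq> Blank" using bl p by (rule nth_nonblank)
  then have a: "gstep Or main_machine (Outer b e, init_tape w, int p, ones Q, int Q) = (Inner ?s b e, ?T, int p - 1, ones Q, int Q)"
    using init_tape_nth[OF p] by (simp add: gstep.simps)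
  have "\<forall>j<p. ?T (int p - 1 - int j) \<noteq> Blank"
  proof (intro allI impI)
    fix j assume j: "j < p"
    have e: "int p - 1 - int j = int (p - 1 - j)" using j by simp
    have lt: "p - 1 - j < length w" using j p by simp
    then have "w ! (p - 1 - j) \<noteq> Blank" using bl by (rule nth_nonblank[rotated])
    then show "?T (int p - 1 - int j) \<noteq> Blank" unfolding e using j init_tape_nth[OF lt] by simp
  qed
  then have "reaches Or main_machine (Inner ?s b e, ?T, int p - 1, ones Q, int Q)
      (Inner ?s b e, ?T, int p - 1 - int p, ones (Q + 2 * p), int (Q + 2 * p)) (2 * p)"
    by (rule inner_ones)
  then have inner: "reaches Or main_machine (Inner ?s b e, ?T, int p - 1, ones Q, int Q)
      (Inner ?s b e, ?T, -1, ones (Q + 2 * p), int (Q + 2 * p)) (2 * p)"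
    by simp
  have c: "gstep Or main_machine (Inner ?s b e, ?T, -1, ones (Q + 2 * p), int (Q + 2 * p))
      = (Restore ?s b e, ?T, 0, ones (Q + 2 * p), int (Q + 2 * p))"
    by (simp add: gstep.simps init_tape_neg)
  from reaches_step[OF a reaches_trans[OF inner reaches_one[OF c]]] show ?thesis by simp
qed

lemma outer_step:
  assumes bl: "Blank \<notin> set w" and p: "p < length w"
  shows "reaches Or main_machine (Outer b e, init_tape w, int p, ones Q, int Q)
     (Outer b e, init_tape w, int p + 1, ones (Q + 2 * p), int (Q + 2 * p)) (3 * p + 3)"
proof -
  let ?s = "w ! p"
  let ?T = "(init_tape w)(int p := Blank)"
  let ?Q = "ones (Q + 2 * p)"
  have "reaches Or main_machine (Restore ?s b e, ?T, 0, ?Q, int (Q + 2 * p))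
      (Restore ?s b e, ?T, 0 + shift Rgt * int p, ?Q, int (Q + 2 * p)) p"
  proof (rule sweep[where A = "- {Blank}"])
    fix j assume j: "j < p"
    then have "j < length w" using p by simp
    then show "?T (0 + shift Rgt * int j) \<in> - {Blank}" using j bl by (simp add: init_tape_nth nth_nonblank)
  qed auto
  then have restore: "reaches Or main_machine (Restore ?s b e, ?T, 0, ?Q, int (Q + 2 * p))
      (Restore ?s b e, ?T, int p, ?Q, int (Q + 2 * p)) p"
    by simp
  have "?T(int p := ?s) = init_tape w" using init_tape_nth[OF p] by (intro ext) auto
  then have d: "gstep Or main_machine (Restore ?s b e, ?T, int p, ?Q, int (Q + 2 * p))
      = (Outer b e, init_tape w, int p + 1, ?Q, int (Q + 2 * p))"
    by (simp add: gstep.simps)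
  from reaches_trans[OF outer_mark_prefix[OF bl p] reaches_trans[OF restore reaches_one[OF d]]]
  show ?thesis by (rule reaches_mono) simp
qed

lemma outer_loop:
  assumes bl: "Blank \<notin> set w" and p: "p \<le> length w"
  shows "reaches Or main_machine (Outer b e, init_tape w, 0, ones Q, int Q)
     (Outer b e, init_tape w, int p, ones (Q + 2 * (\<Sum>j<p. j)), int (Q + 2 * (\<Sum>j<p. j)))
     (p * (3 * p + 3))"
  using p
proof (induction p)
  case 0 then show ?case by (simp add: reaches_refl)
next
  case (Suc p)
  let ?Q = "Q + 2 * (\<Sum>j<p. j)"
  have IH: "reaches Or main_machine (Outer b e, init_tape w, 0, ones Q, int Q)
      (Outer b e, init_tape w, int p, ones ?Q, int ?Q) (p * (3 * p + 3))"
    using Suc by simp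
  have "reaches Or main_machine (Outer b e, init_tape w, int p, ones ?Q, int ?Q)
      (Outer b e, init_tape w, int p + 1, ones (?Q + 2 * p), int (?Q + 2 * p)) (3 * p + 3)"
    using Suc.prems by (intro outer_step[OF bl]) simp
  from reaches_trans[OF IH this]
  have "reaches Or main_machine (Outer b e, init_tape w, 0, ones Q, int Q)
      (Outer b e, init_tape w, int (Suc p), ones (Q + 2 * (\<Sum>j<Suc p. j)), int (Q + 2 * (\<Sum>j<Suc p. j))) 
      (p * (3 * p + 3) + (3 * p + 3))"
    by (simp add: algebra_simps)
  then show ?case by (rule reaches_mono) (simp add: algebra_simps)
qed

text \<open>The pair (|x|, |p|) has number tri (|x| + |p|) + |x|, see unpair_tri.\<close>

lemma encode_position:
  assumes x: "set x \<subseteq> {S0, S1}" and p: "Blank \<notin> set p"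
  defines "w \<equiv> x @ Hash # p" and "E \<equiv> tri (length x + length p) + length x"
  shows "reaches Or main_machine (Rewind0 b e, init_tape w, int (length w), ones 0, 0)
     (Outer b e, init_tape w, int (length w), ones (2 * E), int (2 * E)) (4 * (length w + 2) ^ 2)"
proof -
  let ?L = "length w"
  let ?n = "length x"
  have bl: "Blank \<notin> set w" using x p unfolding w_def by auto
  have a: "gstep Or main_machine (Rewind0 b e, init_tape w, int ?L, ones 0, 0) = (Rewind b e, init_tape w, int ?L - 1, ones 0, 0)"
    by (simp add: gstep.simps)
  have rewind: "reaches Or main_machine (Rewind b e, init_tape w, int ?L - 1, ones 0, 0) (Rewind b e, init_tape w, -1, ones 0, 0) ?L"
    by (rule sweep_left[OF bl]) simp_all
  have c: "gstep Or main_machine (Rewind b e, init_tape w, -1, ones 0, 0) = (PadInput b e, init_tape w, 0, ones 0, 0)"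
    by (simp add: gstep.simps init_tape_neg)
  have "\<forall>j<?n. w ! j \<in> {S0, S1}" using x unfolding w_def by (auto simp: nth_append dest!: nth_mem)
  then have pad: "reaches Or main_machine (PadInput b e, init_tape w, 0, ones 0, 0)
      (PadInput b e, init_tape w, int ?n, ones (2 * ?n), int (2 * ?n)) (2 * ?n)"
    by (rule pad_input) (simp add: w_def)
  have "init_tape w (int ?n) = Hash" using init_tape_nth[of ?n w] unfolding w_def by simp
  then have d: "gstep Or main_machine (PadInput b e, init_tape w, int ?n, ones (2 * ?n), int (2 * ?n))
      = (Rewind2 b e, init_tape w, int ?n - 1, ones (2 * ?n), int (2 * ?n))"
    by (simp add: gstep.simps)
  have rewind2: "reaches Or main_machine (Rewind2 b e, init_tape w, int ?n - 1, ones (2 * ?n), int (2 * ?n))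
      (Rewind2 b e, init_tape w, -1, ones (2 * ?n), int (2 * ?n)) ?n"
    by (rule sweep_left[OF bl]) (simp_all add: w_def)
  have f: "gstep Or main_machine (Rewind2 b e, init_tape w, -1, ones (2 * ?n), int (2 * ?n))
      = (Outer b e, init_tape w, 0, ones (2 * ?n), int (2 * ?n))"
    by (simp add: gstep.simps init_tape_neg)
  have "2 * ?n + 2 * (\<Sum>j<?L. j) = 2 * E"
    unfolding E_def w_def by (simp add: tri_eq_sum)
  then have outer: "reaches Or main_machine (Outer b e, init_tape w, 0, ones (2 * ?n), int (2 * ?n))
      (Outer b e, init_tape w, int ?L, ones (2 * E), int (2 * E)) (?L * (3 * ?L + 3))"
    using outer_loop[OF bl, where p = ?L and b = b and e = e and Q = "2 * ?n"] by simp
  have "reaches Or main_machine (Rewind0 b e, init_tape w, int ?L, ones 0, 0)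
      (Outer b e, init_tape w, int ?L, ones (2 * E), int (2 * E))
      (Suc (?L + Suc (2 * ?n + Suc (?n + Suc (?L * (3 * ?L + 3))))))"
    using reaches_step[OF a reaches_trans[OF rewind reaches_step[OF c reaches_trans[OF pad
        reaches_step[OF d reaches_trans[OF rewind2 reaches_step[OF f outer]]]]]]] .
  moreover have "?n \<le> ?L" unfolding w_def by simp
  ultimately show ?thesis by (elim reaches_mono) (simp add: power2_eq_square algebra_simps)
qed

lemma query_even_bit:
  assumes x: "set x \<subseteq> {S0, S1}" and p: "Blank \<notin> set p" and LF: "Oq 1 = advice_lang Or M"
  defines "w \<equiv> x @ Hash # p"
  shows "reaches Oq main_machine (Rewind0 False False, init_tape w, int (length w), ones 0, 0)
     (Rewind0 True (sym_bit False (final_tape Or M (length x) (int (length p)))), init_tape w, int (length w), ones 0, 0)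
     (4 * (length w + 2) ^ 2 + 1)"
proof -
  let ?E = "tri (length x + length p) + length x"
  have enc: "reaches Oq main_machine (Rewind0 False False, init_tape w, int (length w), ones 0, 0)
      (Outer False False, init_tape w, int (length w), ones (2 * ?E), int (2 * ?E)) (4 * (length w + 2) ^ 2)"
    using encode_position[OF x p, where Or = Oq and b = False and e = False] unfolding w_def .
  have "content (ones (2 * ?E)) \<in> Oq 1 \<longleftrightarrow> sym_bit False (final_tape Or M (length x) (int (length p)))"
    unfolding content_ones LF advice_lang_iff by (simp add: unpair_tri)
  then have "gstep Oq main_machine (Outer False False, init_tape w, int (length w), ones (2 * ?E), int (2 * ?E))
      = (Rewind0 True (sym_bit False (final_tape Or M (length x) (int (length p)))), init_tape w, int (length w), ones 0, 0)"
    using init_tape_length[of w] by (auto simp: gstep.simps ones_0)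
  from reaches_trans[OF enc reaches_one[OF this]] show ?thesis by simp
qed

lemma query_odd_bit:
  assumes x: "set x \<subseteq> {S0, S1}" and p: "Blank \<notin> set p" and LF: "Oq 1 = advice_lang Or M"
  defines "w \<equiv> x @ Hash # p"
  shows "reaches Oq main_machine (Rewind0 True e, init_tape w, int (length w), ones 0, 0)
     (Decode e (sym_bit True (final_tape Or M (length x) (int (length p)))), init_tape w, int (length w), ones 0, 0)
     (4 * (length w + 2) ^ 2 + 2)"
proof -
  let ?E = "tri (length x + length p) + length x"
  have enc: "reaches Oq main_machine (Rewind0 True e, init_tape w, int (length w), ones 0, 0)
      (Outer True e, init_tape w, int (length w), ones (2 * ?E), int (2 * ?E)) (4 * (length w + 2) ^ 2)"
    using encode_position[OF x p, where Or = Oq and b = True and e = e] unfolding w_def .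
  have a: "gstep Oq main_machine (Outer True e, init_tape w, int (length w), ones (2 * ?E), int (2 * ?E))
      = (AskOdd e, init_tape w, int (length w), ones (2 * ?E + 1), int (2 * ?E + 1))"
    using init_tape_length[of w] ones_snoc[of "2 * ?E"] by (simp add: gstep.simps)
  have "content (ones (2 * ?E + 1)) \<in> Oq 1 \<longleftrightarrow> sym_bit True (final_tape Or M (length x) (int (length p)))"
    unfolding content_ones LF advice_lang_iff by (simp add: unpair_tri)
  then have b: "gstep Oq main_machine (AskOdd e, init_tape w, int (length w), ones (2 * ?E + 1), int (2 * ?E + 1))
      = (Decode e (sym_bit True (final_tape Or M (length x) (int (length p)))), init_tape w, int (length w), ones 0, 0)"
    by (auto simp: gstep.simps ones_0)
  from reaches_trans[OF enc reaches_step[OF a reaches_one[OF b]]] show ?thesis by simp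
qed

lemma fetch_symbol:
  assumes x: "set x \<subseteq> {S0, S1}" and p: "Blank \<notin> set p" and LF: "Oq 1 = advice_lang Or M"
  defines "w \<equiv> x @ Hash # p" and "s \<equiv> final_tape Or M (length x) (int (length p))"
  shows "reaches Oq main_machine (Rewind0 False False, init_tape w, int (length w), ones 0, 0)
     (if s = Blank then (Final0, init_tape w, int (length w), ones 0, 0)
      else (Rewind0 False False, init_tape (w @ [s]), int (length w) + 1, ones 0, 0))
     (9 * (length w + 2) ^ 2)"
proof -
  have bit0: "reaches Oq main_machine (Rewind0 False False, init_tape w, int (length w), ones 0, 0)
      (Rewind0 True (sym_bit False s), init_tape w, int (length w), ones 0, 0) (4 * (length w + 2) ^ 2 + 1)"
    using query_even_bit[where Oq = Oq and Or = Or and M = M, OF x p LF] unfolding w_def s_def .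
  have bit1: "reaches Oq main_machine (Rewind0 True (sym_bit False s), init_tape w, int (length w), ones 0, 0)
      (Decode (sym_bit False s) (sym_bit True s), init_tape w, int (length w), ones 0, 0) (4 * (length w + 2) ^ 2 + 2)"
    using query_odd_bit[where Oq = Oq and Or = Or and M = M, OF x p LF] unfolding w_def s_def .
  have "gstep Oq main_machine (Decode (sym_bit False s) (sym_bit True s), init_tape w, int (length w), ones 0, 0)
      = (if s = Blank then (Final0, init_tape w, int (length w), ones 0, 0)
         else (Rewind0 False False, init_tape (w @ [s]), int (length w) + 1, ones 0, 0))"
    using sym_of_bits_sym_bit[of s] init_tape_snoc[of w s] by (simp add: gstep.simps)
  from reaches_trans[OF reaches_trans[OF bit0 bit1] reaches_one[OF this]] show ?thesis
    by (rule reaches_mono) (simp add: power2_eq_square algebra_simps)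
qed

definition prefix :: "(int \<Rightarrow> sym) \<Rightarrow> nat \<Rightarrow> sym list" where
  "prefix W i = map (\<lambda>j. W (int j)) [0..<i]"

lemma fetch_advice:
  assumes x: "set x \<subseteq> {S0, S1}" and LF: "Oq 1 = advice_lang Or M"
    and nonblank: "\<forall>j<i. final_tape Or M (length x) (int j) \<noteq> Blank"
  shows "reaches Oq main_machine (Rewind0 False False, init_tape (x @ [Hash]), int (length x + 1), ones 0, 0)
     (Rewind0 False False, init_tape (x @ Hash # prefix (final_tape Or M (length x)) i), int (length x + 1 + i), ones 0, 0)
     (i * (9 * (length x + 3 + i) ^ 2))"
  using nonblank
proof (induction i)
  case 0 then show ?case by (simp add: reaches_refl prefix_def)
next
  case (Suc i)
  let ?W = "final_tape Or M (length x)"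
  let ?p = "prefix ?W i"
  have IH: "reaches Oq main_machine (Rewind0 False False, init_tape (x @ [Hash]), int (length x + 1), ones 0, 0)
     (Rewind0 False False, init_tape (x @ Hash # ?p), int (length x + 1 + i), ones 0, 0)
     (i * (9 * (length x + 3 + i) ^ 2))"
    using Suc by simp
  have "Blank \<notin> set ?p"
  proof
    assume "Blank \<in> set ?p"
    then obtain j where "j < i" "?W (int j) = Blank" unfolding prefix_def by auto
    then show False using Suc.prems by simp
  qed
  moreover have "length ?p = i" "?W (int i) \<noteq> Blank" using Suc.prems by (simp_all add: prefix_def)
  ultimately have "reaches Oq main_machine (Rewind0 False False, init_tape (x @ Hash # ?p), int (length x + 1 + i), ones 0, 0)
     (Rewind0 False False, init_tape (x @ Hash # prefix ?W (Suc i)), int (length x + 1 + Suc i), ones 0, 0)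
     (9 * (length x + 3 + i) ^ 2)"
    using fetch_symbol[where Oq = Oq and Or = Or and M = M and p = ?p, OF x _ LF] by (simp add: prefix_def numeral_3_eq_3)
  from reaches_trans[OF IH this] show ?case
  proof (rule reaches_mono)
    let ?A = "length x + 3 + i" and ?B = "length x + 3 + Suc i"
    have "i * (9 * ?A ^ 2) + 9 * ?A ^ 2 = Suc i * (9 * ?A ^ 2)" by simp
    also have "\<dots> \<le> Suc i * (9 * ?B ^ 2)" by (intro mult_le_mono2 power_mono) simp_all
    finally show "i * (9 * ?A ^ 2) + 9 * ?A ^ 2 \<le> Suc i * (9 * ?B ^ 2)" .
  qed
qed

lemma copy_to_query:
  assumes bl: "Blank \<notin> set w" and j: "j \<le> length w"
  shows "reaches Or main_machine (CopyQuery, init_tape w, 0, ones 0, 0) (CopyQuery, init_tape w, int j, init_tape (take j w), int j) j"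
  using j
proof (induction j)
  case 0
  have "ones 0 = init_tape []" by (rule ext) (simp add: ones_def init_tape_def)
  then show ?case by (simp add: reaches_refl)
next
  case (Suc j)
  then have IH: "reaches Or main_machine (CopyQuery, init_tape w, 0, ones 0, 0) (CopyQuery, init_tape w, int j, init_tape (take j w), int j) j"
    by simp
  have lt: "j < length w" using Suc.prems by simp
  have "(init_tape (take j w))(int j := w ! j) = init_tape (take (Suc j) w)"
    using init_tape_snoc[of "take j w" "w ! j"] lt by (simp add: take_Suc_conv_app_nth)
  then have "gstep Or main_machine (CopyQuery, init_tape w, int j, init_tape (take j w), int j)
      = (CopyQuery, init_tape w, int (Suc j), init_tape (take (Suc j) w), int (Suc j))"
    using nth_nonblank[OF bl lt] init_tape_nth[OF lt] by (simp add: gstep.simps)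
  from reaches_trans[OF IH reaches_one[OF this]] show ?case by simp
qed

lemma final_query:
  assumes bl: "Blank \<notin> set w"
  shows "\<exists>r. reaches Or main_machine (Final0, init_tape w, int (length w), ones 0, 0) r (2 * length w + 4)
           \<and> gstop_of main_machine r = Some (w \<in> Or 0)"
proof -
  let ?L = "length w"
  have a: "gstep Or main_machine (Final0, init_tape w, int ?L, ones 0, 0) = (Final, init_tape w, int ?L - 1, ones 0, 0)"
    by (simp add: gstep.simps)
  have rewind: "reaches Or main_machine (Final, init_tape w, int ?L - 1, ones 0, 0) (Final, init_tape w, -1, ones 0, 0) ?L"
    by (rule sweep_left[OF bl]) simp_all
  have c: "gstep Or main_machine (Final, init_tape w, -1, ones 0, 0) = (CopyQuery, init_tape w, 0, ones 0, 0)"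
    by (simp add: gstep.simps init_tape_neg)
  have copy: "reaches Or main_machine (CopyQuery, init_tape w, 0, ones 0, 0) (CopyQuery, init_tape w, int ?L, init_tape w, int ?L) ?L"
    using copy_to_query[OF bl, of ?L] by simp
  let ?r = "(if w \<in> Or 0 then Accept else Reject, init_tape w, int ?L, (\<lambda>_. Blank), 0::int)"
  have "content (init_tape w) = w" using bl by (simp add: content_init nonblank_def)
  then have d: "gstep Or main_machine (CopyQuery, init_tape w, int ?L, init_tape w, int ?L) = ?r"
    using init_tape_length[of w] by (simp add: gstep.simps)
  have "reaches Or main_machine (Final0, init_tape w, int ?L, ones 0, 0) ?r (Suc (?L + Suc (?L + 1)))"
    using reaches_step[OF a reaches_trans[OF rewind reaches_step[OF c reaches_trans[OF copy reaches_one[OF d]]]]] .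
  moreover have "gstop_of main_machine ?r = Some (w \<in> Or 0)" by simp
  ultimately show ?thesis by (intro exI[of _ ?r]) (auto intro: reaches_mono)
qed

lemma
  fixes n :: nat
  assumes "computes_advice_in Or M k a"
  shows advice_eq_prefix: "a n = prefix (final_tape Or M n) (length (a n))"
    and final_tape_at_advice_end: "final_tape Or M n (int (length (a n))) = Blank"
    and final_tape_before_advice_end: "\<forall>j<length (a n). final_tape Or M n (int j) \<noteq> Blank"
    and Blank_notin_advice: "Blank \<notin> set (a n)"
    and length_advice_le: "length (a n) \<le> n + halt_time Or M n"
proof -
  let ?W = "final_tape Or M n"
  define i where "i = (LEAST j. ?W (int j) = Blank)"
  have ex: "?W (int (n + halt_time Or M n)) = Blank" by (rule final_tape_blank_beyond) simp
  have a: "a n = prefix ?W i"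
    using content_final_tape[OF assms(1), of n] unfolding content_def prefix_def i_def by simp
  then have i: "length (a n) = i" by (simp add: prefix_def)
  show "a n = prefix ?W (length (a n))" using a i by simp
  show "?W (int (length (a n))) = Blank" unfolding i i_def by (rule LeastI[of "\<lambda>j. ?W (int j) = Blank", OF ex])
  show "\<forall>j<length (a n). ?W (int j) \<noteq> Blank" unfolding i i_def using not_less_Least by blast
  show "Blank \<notin> set (a n)"
  proof
    assume "Blank \<in> set (a n)"
    then obtain j where "j < i" "?W (int j) = Blank" unfolding a prefix_def by auto
    then show False unfolding i_def using not_less_Least by blast
  qed
  show "length (a n) \<le> n + halt_time Or M n" unfolding i i_def by (rule Least_le[of "\<lambda>j. ?W (int j) = Blank", OF ex])
qed

lemma main_machine_fetches_advice:
  assumes adv: "computes_advice_in Or M k a" and LF: "Oq 1 = advice_lang Or M" and x: "set x \<subseteq> {S0, S1}"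
  defines "n \<equiv> length x" and "i \<equiv> length (a (length x))"
  shows "reaches Oq main_machine (init_config CheckInput x)
     (Final0, init_tape (x @ Hash # a n), int (length (x @ Hash # a n)), ones 0, 0)
     (n + Suc (i * (9 * (n + 3 + i) ^ 2) + 9 * (n + 3 + i) ^ 2))"
proof -
  let ?W = "final_tape Or M n"
  have "reaches Oq main_machine (CheckInput, init_tape x, 0, (\<lambda>_. Blank), 0)
      (CheckInput, init_tape x, 0 + shift Rgt * int n, (\<lambda>_. Blank), 0) n"
  proof (rule sweep[where A = "{S0, S1}"])
    fix j assume j: "j < n"
    then have "x ! j \<in> {S0, S1}" using x unfolding n_def by (meson nth_mem subsetD)
    then show "init_tape x (0 + shift Rgt * int j) \<in> {S0, S1}"
      using j init_tape_nth[of j x] unfolding n_def by simp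
  qed auto
  then have check: "reaches Oq main_machine (init_config CheckInput x) (CheckInput, init_tape x, int n, (\<lambda>_. Blank), 0) n"
    unfolding init_config_def by simp
  have start: "gstep Oq main_machine (CheckInput, init_tape x, int n, (\<lambda>_. Blank), 0)
      = (Rewind0 False False, init_tape (x @ [Hash]), int (n + 1), ones 0, 0)"
    using init_tape_length[of x] init_tape_snoc[of x Hash] unfolding n_def by (simp add: gstep.simps ones_0)
  have prefix: "a n = prefix ?W i" "?W (int i) = Blank" "\<forall>j<i. ?W (int j) \<noteq> Blank"
    using advice_eq_prefix[OF adv, of n] final_tape_at_advice_end[OF adv, of n]
      final_tape_before_advice_end[OF adv, of n] unfolding i_def n_def by simp_all
  have fetch: "reaches Oq main_machine (Rewind0 False False, init_tape (x @ [Hash]), int (n + 1), ones 0, 0)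
      (Rewind0 False False, init_tape (x @ Hash # a n), int (n + 1 + i), ones 0, 0) (i * (9 * (n + 3 + i) ^ 2))"
    using fetch_advice[where Oq = Oq and Or = Or and M = M, OF x LF prefix(3)[unfolded n_def]] prefix(1) unfolding n_def by simp
  have "Blank \<notin> set (a n)" "length (a n) = i" using Blank_notin_advice[OF adv, of n] unfolding i_def n_def by simp_all
  then have last: "reaches Oq main_machine (Rewind0 False False, init_tape (x @ Hash # a n), int (n + 1 + i), ones 0, 0)
      (Final0, init_tape (x @ Hash # a n), int (length (x @ Hash # a n)), ones 0, 0) (9 * (n + 3 + i) ^ 2)"
    using fetch_symbol[where Oq = Oq and Or = Or and M = M and p = "a n", OF x _ LF] prefix(2)
    unfolding n_def by (simp add: numeral_3_eq_3)
  show ?thesis using reaches_trans[OF check reaches_step[OF start reaches_trans[OF fetch last]]] .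
qed

lemma Hash_append_inj: "Hash \<notin> set x \<Longrightarrow> Hash \<notin> set y \<Longrightarrow> x @ Hash # u = y @ Hash # v \<Longrightarrow> x = y"
proof (induction x arbitrary: y)
  case Nil then show ?case by (cases y) auto
next
  case (Cons c x) then show ?case by (cases y) auto
qed

lemma main_time_bound:
  fixes n i T k :: nat
  assumes "i \<le> n + T" and "T \<le> (n + 2) ^ k"
  shows "n + Suc (i * (9 * (n + 3 + i) ^ 2) + 9 * (n + 3 + i) ^ 2) + (2 * (n + 1 + i) + 4) \<le> (n + 2) ^ (12 * k + 12)"
proof -
  define A where "A = n + 3 + i"
  let ?X = "n + 2"
  have "A \<le> 2 * ?X + ?X ^ k" using assms unfolding A_def by simp
  also have "\<dots> \<le> 3 * ?X ^ (k + 1)"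
    using power_increasing[of 1 "k + 1" ?X] power_increasing[of k "k + 1" ?X] by simp
  finally have A: "A \<le> 3 * ?X ^ (k + 1)" .
  have A3: "3 \<le> A" unfolding A_def by simp
  have "i * (9 * A ^ 2) \<le> 9 * A ^ 3"
    using mult_le_mono1[of i A "9 * A ^ 2"] unfolding A_def by (simp add: power2_eq_square power3_eq_cube algebra_simps)
  moreover have "9 * A ^ 2 \<le> 3 * A ^ 3"
    using mult_le_mono1[OF A3, of "3 * A ^ 2"] by (simp add: power2_eq_square power3_eq_cube algebra_simps)
  moreover have "5 * A \<le> A ^ 3"
    using mult_le_mono1[of 5 "A * A" A] mult_le_mono[OF A3 A3] by (simp add: power3_eq_cube)
  moreover have "n + Suc (P + 9 * Q) + (2 * (n + 1 + i) + 4) \<le> 14 * R"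
    if "P \<le> 9 * R" "9 * Q \<le> 3 * R" "5 * A \<le> R" for P Q R :: nat
    using that A_def by simp
  ultimately have "n + Suc (i * (9 * A ^ 2) + 9 * A ^ 2) + (2 * (n + 1 + i) + 4) \<le> 14 * A ^ 3"
    by blast
  also have "\<dots> \<le> 14 * (3 * ?X ^ (k + 1)) ^ 3" using A by (intro mult_le_mono2 power_mono) simp_all
  also have "\<dots> = 378 * ?X ^ (3 * k + 3)"
    using power_mult[of ?X "k + 1" 3] by (simp only: power_mult_distrib) (simp add: algebra_simps)
  also have "\<dots> \<le> ?X ^ (3 * k + 3 + 9)" by (rule const_mult_le_power) simp_all
  also have "\<dots> \<le> ?X ^ (12 * k + 12)" by (rule power_increasing) simp_all
  finally show ?thesis unfolding A_def .
qed

lemma main_machine_on_binary: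
  assumes L_binary: "\<forall>y\<in>L. binary y" and adv: "computes_advice_in Or M k a"
    and LF: "Oq 1 = advice_lang Or M" and LE: "Oq 0 = {y @ Hash # a (length y) | y. y \<in> L}"
    and x: "set x \<subseteq> {S0, S1}"
  shows "\<exists>r. reaches Oq main_machine (init_config CheckInput x) r ((length x + 2) ^ (12 * k + 12))
           \<and> gstop_of main_machine r = Some (x \<in> L)"
proof -
  let ?n = "length x" and ?i = "length (a (length x))"
  let ?w = "x @ Hash # a ?n"
  have "Blank \<notin> set ?w" using x Blank_notin_advice[OF adv, of ?n] by auto
  then obtain r where r: "reaches Oq main_machine (Final0, init_tape ?w, int (length ?w), ones 0, 0) r (2 * length ?w + 4)"
      "gstop_of main_machine r = Some (?w \<in> Oq 0)"
    using final_query by blast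
  have "?n + Suc (?i * (9 * (?n + 3 + ?i) ^ 2) + 9 * (?n + 3 + ?i) ^ 2) + (2 * length ?w + 4) \<le> (?n + 2) ^ (12 * k + 12)"
    using main_time_bound[OF length_advice_le[OF adv] halt_time_le[OF adv]] by simp
  then have "reaches Oq main_machine (init_config CheckInput x) r ((?n + 2) ^ (12 * k + 12))"
    using reaches_mono[OF reaches_trans[OF main_machine_fetches_advice[where Oq = Oq and Or = Or and M = M, OF adv LF x] r(1)]] by blast
  moreover have "?w \<in> Oq 0 \<longleftrightarrow> x \<in> L"
  proof
    assume "?w \<in> Oq 0"
    then have "\<exists>y. ?w = y @ Hash # a (length y) \<and> y \<in> L" unfolding LE mem_Collect_eq .
    then obtain y where y: "y \<in> L" "y @ Hash # a (length y) = ?w" by metis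
    have "Hash \<notin> set y" using L_binary y(1) unfolding binary_def by auto
    moreover have "Hash \<notin> set x" using x by auto
    ultimately have "y = x" using y(2) by (rule Hash_append_inj)
    then show "x \<in> L" using y(1) by simp
  qed (auto simp: LE)
  ultimately show ?thesis using r(2) by (intro exI[of _ r]) simp
qed

lemma main_machine_rejects:
  assumes x: "nonblank x" and c: "c < length x" "x ! c \<notin> {S0, S1}" "\<forall>j<c. x ! j \<in> {S0, S1}"
  shows "\<exists>r. reaches Oq main_machine (init_config CheckInput x) r c \<and> gstop_of main_machine r = Some False"
proof -
  have "reaches Oq main_machine (CheckInput, init_tape x, 0, (\<lambda>_. Blank), 0)
      (CheckInput, init_tape x, 0 + shift Rgt * int c, (\<lambda>_. Blank), 0) c"
  proof (rule sweep[where A = "{S0, S1}"])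
    fix j assume "j < c"
    then show "init_tape x (0 + shift Rgt * int j) \<in> {S0, S1}" using c init_tape_nth[of j x] by auto
  qed auto
  moreover have "x ! c \<noteq> Blank" using x c(1) unfolding nonblank_def by (simp add: nth_nonblank)
  then have "x ! c = Hash" using c(2) by (cases "x ! c") auto
  then have "gstop_of main_machine (CheckInput, init_tape x, int c, (\<lambda>_. Blank), 0) = Some False"
    using init_tape_nth[OF c(1)] by simp
  ultimately show ?thesis unfolding init_config_def
    by (intro exI[of _ "(CheckInput, init_tape x, int c, (\<lambda>_. Blank), 0)"]) simp
qed

lemma main_machine_decides:
  assumes L_binary: "\<forall>y\<in>L. binary y" and adv: "computes_advice_in Or M k a"
    and LF: "Oq 1 = advice_lang Or M" and LE: "Oq 0 = {y @ Hash # a (length y) | y. y \<in> L}"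
  shows "gdecides_in Oq main_machine CheckInput (12 * k + 12) L"
  unfolding gdecides_in_def
proof (intro allI impI)
  fix x assume x: "nonblank x"
  show "\<exists>r. reaches Oq main_machine (init_config CheckInput x) r ((length x + 2) ^ (12 * k + 12))
      \<and> gstop_of main_machine r = Some (x \<in> L)"
  proof (cases "set x \<subseteq> {S0, S1}")
    case True
    then show ?thesis by (rule main_machine_on_binary[OF L_binary adv LF LE])
  next
    case False
    define c where "c = (LEAST c. c < length x \<and> x ! c \<notin> {S0, S1})"
    have ex: "\<exists>c. c < length x \<and> x ! c \<notin> {S0, S1}" using False by (auto simp: in_set_conv_nth)
    have c: "c < length x" "x ! c \<notin> {S0, S1}" "\<forall>j<c. x ! j \<in> {S0, S1}"
      using LeastI_ex[OF ex] not_less_Least[of _ "\<lambda>c. c < length x \<and> x ! c \<notin> {S0, S1}"]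
      unfolding c_def[symmetric] by (auto dest: order.strict_trans)
    obtain r where "reaches Oq main_machine (init_config CheckInput x) r c" "gstop_of main_machine r = Some False"
      using main_machine_rejects[OF x c] by blast
    moreover have "x \<notin> L" using L_binary False unfolding binary_def by auto
    moreover have "c \<le> (length x + 2) ^ (12 * k + 12)"
      using c(1) self_le_power[of "length x + 2" "12 * k + 12"] by simp
    ultimately show ?thesis by (intro exI[of _ r]) (simp add: reaches_mono)
  qed
qed

theorem lemma2:
  fixes B C :: "lang set"
  shows "Cpoly C B \<subseteq> P_rel2 C (Unary (P_rel B))"
proof
  fix L assume "L \<in> Cpoly C B"
  then obtain a LB M N k where L_binary: "\<forall>x\<in>L. binary x" and "LB \<in> B"
      and M: "wf_otm N M" "computes_advice_in (\<lambda>_. LB) M k a"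
      and LE: "{x @ Hash # a (length x) | x. x \<in> L} \<in> C"
    unfolding Cpoly_def by blast
  let ?LE = "{x @ Hash # a (length x) | x. x \<in> L}" and ?LF = "advice_lang (\<lambda>_. LB) M"
  let ?Oq = "\<lambda>j. if j = 0 then ?LE else if j = 1 then ?LF else {}"
  have "gdecides_in ?Oq main_machine CheckInput (12 * k + 12) L"
    by (rule main_machine_decides[OF L_binary M(2)]) simp_all
  then have "P_oracle ?Oq L"
    using L_binary by (intro P_oracle_of_gtm[OF finite_mstate UNIV_I])
      (auto simp: closed_states_def binary_def nonblank_def)
  moreover have "?LF \<in> Unary (P_rel B)" using advice_lang_in_Unary_P_rel[OF \<open>LB \<in> B\<close> M] .
  ultimately show "L \<in> P_rel2 C (Unary (P_rel B))" unfolding P_rel2_def using LE by blast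
qed

end
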